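(* Let $p\ge1$ and $K\in\mathcal K^{n,1}_{(o)}$. Then for every $Q\in\mathcal K_o^{1,m}$ and every star body $L\subset M_{n,m}$, \[ \widetilde V_{-p,nm}(L,\Pi^\circ_{Q,p}K)=\frac{(nm+p)\,\mathrm{vol}_{nm}(L)}{m}\,V_{p,n}(K,\Gamma_{Q,p}L). \]
   Context: $M_{k,l}$: real $k\times l$ matrices with inner product $\langle A,B\rangle=\mathrm{tr}(A^t.B)$, identified with $\mathbb R^{kl}$ (Lebesgue measure $\mathrm{vol}_{kl}$, sphere $\mathbb S^{kl-1}$); $A.B$ matrix product; $\mathbb R^n\cong M_{n,1}$, $\mathbb R^m\cong M_{1,m}$. $\mathcal K_o^{k,l}$ / $\mathcal K_{(o)}^{k,l}$: convex bodies in $M_{k,l}$ containing the origin / containing it in the interior. $h_G(x)=\sup_{y\in G}\langle y,x\rangle$, $G^\circ=\{x:h_G(x)\le1\}$. For $K\in\mathcal K^{n,1}_{(o)}$, $\sigma_K$ is its surface area measure, $d\sigma_{K,p}=h_K^{1-p}d\sigma_K$, $\Pi_{Q,p}K$ has $h_{\Pi_{Q,p}K}(x)^p=\int_{\mathbb S^{n-1}}h_Q(v^t.x)^pd\sigma_{K,p}(v)$, $\Pi^\circ_{Q,p}K=(\Pi_{Q,p}K)^\circ$. For compact $L\subset M_{n,m}$ of positive volume, $h_{\Gamma_{Q,p}L}(v)^p=\frac1{\mathrm{vol}_{nm}(L)}\int_Lh_Q(v^t.x)^pdx$, $v\in M_{n,1}$. A star body is a compact set containing the origin in its interior, star-shaped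 w.r.t. the origin, with continuous positive radial function $\rho_L(y)=\sup\{\lambda>0:\lambda y\in L\}$. $L^p$ mixed volume: $V_{p,n}(K,M)=\frac1n\int_{\mathbb S^{n-1}}h_M^p\,d\sigma_{K,p}$. Dual mixed volume in $\mathbb R^d$: $\widetilde V_{-p,d}(K,L)=\frac1d\int_{\mathbb S^{d-1}}\rho_K(\theta)^{d+p}\rho_L(\theta)^{-p}d\theta$. *)

theory Defs
  imports "HOL-Analysis.Analysis"
begin

definition convex_body :: "'a::euclidean_space set \<Rightarrow> bool" where
  "convex_body K \<longleftrightarrow> K \<noteq> {} \<and> compact K \<and> convex K"

definition convex_body_o :: "'a::euclidean_space set \<Rightarrow> bool" where
  "convex_body_o K \<longleftrightarrow> convex_body K \<and> 0 \<in> K"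

definition convex_body_io :: "'a::euclidean_space set \<Rightarrow> bool" where
  "convex_body_io K \<longleftrightarrow> convex_body K \<and> 0 \<in> interior K"

definition supp_fun :: "'a::real_inner set \<Rightarrow> 'a \<Rightarrow> real" where
  "supp_fun G x = (SUP y\<in>G. inner y x)"

definition polar :: "'a::real_inner set \<Rightarrow> 'a set" where
  "polar G = {x. supp_fun G x \<le> 1}"

text \<open>Radial function, extended-real valued (it is "+\<infinity>" in directions in which the
  set is unbounded, e.g. for polars of lower-dimensional bodies).\<close>
definition radial_fun :: "'a::real_normed_vector set \<Rightarrow> 'a \<Rightarrow> ereal" where
  "radial_fun L y = (SUP t\<in>{t. t > 0 \<and> t *\<^sub>R y \<in> L}. ereal t)"

definition star_body :: "'a::euclidean_space set \<Rightarrow> bool" where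
  "star_body L \<longleftrightarrow> compact L \<and> 0 \<in> interior L \<and>
     (\<forall>x\<in>L. \<forall>t\<in>{0..1}. t *\<^sub>R x \<in> L) \<and>
     (\<forall>y\<in>sphere 0 1. 0 < radial_fun L y \<and> radial_fun L y < \<infinity>) \<and>
     continuous_on (sphere 0 1) (\<lambda>y. real_of_ereal (radial_fun L y))"

text \<open>Spherical Lebesgue measure on "S^{d-1}" (as a measure on the ambient space,
  concentrated on the unit sphere): push-forward of "d" times Lebesgue measure on
  the unit ball under radial projection (cone-volume description of the surface measure).\<close>
definition sphere_measure :: "'a::euclidean_space measure" where
  "sphere_measure = distr (density lborel (\<lambda>x. ennreal (real DIM('a)) * indicator (ball 0 1) x))
                          borel (\<lambda>x. x /\<^sub>R norm x)"

text \<open>"s"-dimensional Hausdorff (outer) measure, normalised so that it agrees with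
  "s"-dimensional Lebesgue measure on "s"-dimensional flats.\<close>
definition hausdorff_outer :: "nat \<Rightarrow> 'a::euclidean_space set \<Rightarrow> ennreal" where
  "hausdorff_outer s A =
     (SUP \<delta>\<in>{0<..}. INF C\<in>{C :: nat \<Rightarrow> 'a set. A \<subseteq> (\<Union>i. C i) \<and>
                        (\<forall>i. bounded (C i) \<and> diameter (C i) \<le> \<delta>)}.
        (\<Sum>i. if C i = {} then 0
               else ennreal (unit_ball_vol (real s) * (diameter (C i) / 2) ^ s)))"

definition rev_spherical_image :: "'a::euclidean_space set \<Rightarrow> 'a set \<Rightarrow> 'a set" where
  "rev_spherical_image K \<omega> =
     {x \<in> frontier K. \<exists>v\<in>\<omega>. norm v = 1 \<and> (\<forall>y\<in>K. inner v (y - x) \<le> 0)}"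

text \<open>Surface area measure "\<sigma>_K(\<omega>) = H^{n-1}(\<nu>_K^{-1}(\<omega>))" on Borel subsets of
  the unit sphere (as a measure on the ambient space, concentrated on the sphere).\<close>
definition surface_area_measure :: "'a::euclidean_space set \<Rightarrow> 'a measure" where
  "surface_area_measure K =
     measure_of UNIV (sets borel)
       (\<lambda>\<omega>. hausdorff_outer (DIM('a) - 1) (rev_spherical_image K (\<omega> \<inter> sphere 0 1)))"

definition lp_surface_area_measure :: "real \<Rightarrow> 'a::euclidean_space set \<Rightarrow> 'a measure" where
  "lp_surface_area_measure p K =
     density (surface_area_measure K) (\<lambda>v. ennreal (supp_fun K v powr (1 - p)))"

definition lp_mixed_volume :: "real \<Rightarrow> 'a::euclidean_space set \<Rightarrow> 'a set \<Rightarrow> real" where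
  "lp_mixed_volume p K M =
     (1 / real DIM('a)) * (\<integral>v. supp_fun M v powr p \<partial>(lp_surface_area_measure p K))"

text \<open>Dual mixed volume; "\<rho>_L^{-p}" is read as "(1/\<rho>_L)^p", i.e. 0 where "\<rho>_L = \<infinity>".\<close>
definition dual_mixed_volume :: "real \<Rightarrow> 'a::euclidean_space set \<Rightarrow> 'a set \<Rightarrow> real" where
  "dual_mixed_volume p K L =
     (1 / real DIM('a)) *
       (\<integral>\<theta>. real_of_ereal (radial_fun K \<theta>) powr (real DIM('a) + p) *
            real_of_ereal (inverse (radial_fun L \<theta>)) powr p \<partial>sphere_measure)"

text \<open>"M_{n,m}" is "real^'m^'n" ("n" rows, "m" columns); "R^n \<cong> M_{n,1}" is "real^'n"
  and "R^m \<cong> M_{1,m}" is "real^'m"; "v^t.x" is "v v* x".\<close>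
definition Pi_body :: "(real^'m) set \<Rightarrow> real \<Rightarrow> (real^'n) set \<Rightarrow> (real^'m^'n) set" where
  "Pi_body Q p K =
     {y. \<forall>x. inner y x \<le>
        (\<integral>v. supp_fun Q (v v* x) powr p \<partial>(lp_surface_area_measure p K)) powr (1 / p)}"

definition Gamma_body :: "(real^'m) set \<Rightarrow> real \<Rightarrow> (real^'m^'n) set \<Rightarrow> (real^'n) set" where
  "Gamma_body Q p L =
     {y. \<forall>v. inner y v \<le>
        ((1 / measure lborel L) * (LINT x:L|lborel. supp_fun Q (v v* x) powr p)) powr (1 / p)}"

end

theory Submission
  imports Defs
begin

text \<open>
  The support function of \<open>\<Pi>_{Q,p}K\<close> is the \<open>L^p(\<sigma>_{K,p})\<close>-norm of \<open>v \<mapsto> h_Q(v^t.x)\<close>,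
  and that of \<open>\<Gamma>_{Q,p}L\<close> a normalised \<open>L^p\<close>-norm over \<open>L\<close>. By Minkowski's inequality both
  are sublinear, so they are indeed the support functions of the bodies defined through them, and
  the radial function of the polar of \<open>\<Pi>_{Q,p}K\<close> is the reciprocal of the first. Hence the dual
  mixed volume is \<open>(1/nm) \<integral>_S \<rho>_L(\<theta>)^(nm+p) \<integral> h_Q(v^t.\<theta>)^p d\<sigma>_{K,p}(v) d\<theta>\<close>.
  Exchanging the integrals and integrating the \<open>p\<close>-homogeneous function \<open>x \<mapsto> h_Q(v^t.x)^p\<close>
  over \<open>L\<close> in polar coordinates turns the inner integral into
  \<open>(nm+p) \<integral>_L h_Q(v^t.x)^p dx = (nm+p) vol(L) h_{\<Gamma>_{Q,p}L}(v)^p\<close>.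
  Tonelli applies because \<open>\<sigma>_{K,p}\<close> is finite: the boundary points of \<open>K\<close> lie in the image of
  the surface of a cube under the 1-Lipschitz nearest-point map, so they have finite
  \<open>(n-1)\<close>-dimensional Hausdorff measure.
\<close>

section \<open>Sublinear functions and their Wulff shapes\<close>

definition sublinear :: "('a::real_vector \<Rightarrow> real) \<Rightarrow> bool" where
  "sublinear H \<longleftrightarrow> (\<forall>x y. H (x + y) \<le> H x + H y) \<and> (\<forall>c x. 0 \<le> c \<longrightarrow> H (c *\<^sub>R x) = c * H x)"

lemma sublinearI:
  assumes "\<And>x y. H (x + y) \<le> H x + H y" and "\<And>c x. 0 \<le> c \<Longrightarrow> H (c *\<^sub>R x) = c * H x"
  shows "sublinear H"
  using assms unfolding sublinear_def by blast

lemma sublinear_add: "sublinear H \<Longrightarrow> H (x + y) \<le> H x + H y"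
  unfolding sublinear_def by blast

lemma sublinear_scaleR: "sublinear H \<Longrightarrow> 0 \<le> c \<Longrightarrow> H (c *\<^sub>R x) = c * H x"
  unfolding sublinear_def by blast

lemma sublinear_zero: "sublinear H \<Longrightarrow> H 0 = 0"
  using sublinear_scaleR[of H 0 0] by simp

lemma sublinear_cmult: "sublinear H \<Longrightarrow> 0 \<le> c \<Longrightarrow> sublinear (\<lambda>x. c * H x)"
  by (intro sublinearI) (auto simp: sublinear_scaleR sublinear_add distrib_left[symmetric] mult_left_mono)

lemma sublinear_compose_linear: "sublinear H \<Longrightarrow> linear f \<Longrightarrow> sublinear (\<lambda>x. H (f x))"
  by (intro sublinearI) (simp_all add: linear_add linear_cmul sublinear_add sublinear_scaleR)

lemma supp_fun_upper:
  fixes G :: "'a::real_inner set"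
  assumes "bounded G" and "y \<in> G"
  shows "inner y x \<le> supp_fun G x"
proof -
  obtain R where R: "\<And>z. z \<in> G \<Longrightarrow> norm z \<le> R"
    using \<open>bounded G\<close> unfolding bounded_iff by blast
  have "inner z x \<le> R * norm x" if "z \<in> G" for z
    using norm_cauchy_schwarz[of z x] R[OF that] by (smt (verit) mult_right_mono norm_ge_zero)
  then have "bdd_above ((\<lambda>z. inner z x) ` G)" by (rule bdd_aboveI2)
  then show ?thesis unfolding supp_fun_def using \<open>y \<in> G\<close> by (rule cSUP_upper2) simp
qed

lemma supp_fun_least:
  fixes G :: "'a::real_inner set"
  assumes "G \<noteq> {}" and "\<And>y. y \<in> G \<Longrightarrow> inner y x \<le> c"
  shows "supp_fun G x \<le> c"
  unfolding supp_fun_def using assms by (intro cSUP_least) auto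

lemma supp_fun_nonneg: "bounded G \<Longrightarrow> 0 \<in> G \<Longrightarrow> 0 \<le> supp_fun G x"
  using supp_fun_upper[of G 0 x] by simp

lemma sublinear_supp_fun:
  fixes G :: "'a::real_inner set"
  assumes G: "bounded G" "G \<noteq> {}"
  shows "sublinear (supp_fun G)"
proof (rule sublinearI)
  fix x z
  show "supp_fun G (x + z) \<le> supp_fun G x + supp_fun G z"
    using G by (intro supp_fun_least) (auto simp: inner_add_right intro: add_mono supp_fun_upper)
next
  fix c :: real and x assume c: "0 \<le> c"
  show "supp_fun G (c *\<^sub>R x) = c * supp_fun G x"
  proof (cases "c = 0")
    case True
    then show ?thesis using G unfolding supp_fun_def by simp
  next
    case False
    with c have c: "c > 0" by simp
    have "supp_fun G (c *\<^sub>R x) \<le> c * supp_fun G x"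
      using G c by (intro supp_fun_least) (auto intro: supp_fun_upper mult_left_mono)
    moreover have "supp_fun G x \<le> supp_fun G (c *\<^sub>R x) / c"
      using G c by (intro supp_fun_least) (auto simp: field_simps dest: supp_fun_upper[of G _ "c *\<^sub>R x"])
    ultimately show ?thesis using c by (simp add: field_simps)
  qed
qed

lemma continuous_on_supp_fun:
  fixes G :: "'a::real_inner set"
  assumes G: "bounded G" "G \<noteq> {}"
  shows "continuous_on UNIV (supp_fun G)"
proof -
  obtain R where R: "R > 0" "\<And>y. y \<in> G \<Longrightarrow> norm y \<le> R"
    using \<open>bounded G\<close> unfolding bounded_pos by blast
  have bound: "supp_fun G x \<le> R * norm x" for x
  proof (rule supp_fun_least[OF G(2)])
    fix y assume "y \<in> G"
    then show "inner y x \<le> R * norm x"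
      using norm_cauchy_schwarz[of y x] R(2)[of y] by (smt (verit) mult_right_mono norm_ge_zero)
  qed
  have lip: "supp_fun G x \<le> supp_fun G z + R * dist x z" for x z
    using sublinear_add[OF sublinear_supp_fun[OF G], of z "x - z"] bound[of "x - z"]
    by (simp add: dist_norm)
  have "dist (supp_fun G x) (supp_fun G z) \<le> R * dist x z" for x z
    using lip[of x z] lip[of z x] by (simp add: dist_real_def dist_commute abs_le_iff)
  then have "lipschitz_on R UNIV (supp_fun G)"
    using R(1) by (intro lipschitz_onI) auto
  then show ?thesis by (rule lipschitz_on_continuous_on)
qed

lemma supp_fun_convex_body_o:
  assumes "convex_body_o Q"
  shows "sublinear (supp_fun Q)" and "0 \<le> supp_fun Q x" and "continuous_on UNIV (supp_fun Q)"
proof -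
  have "bounded Q" "Q \<noteq> {}" "0 \<in> Q"
    using assms compact_imp_bounded unfolding convex_body_o_def convex_body_def by auto
  then show "sublinear (supp_fun Q)" "0 \<le> supp_fun Q x" "continuous_on UNIV (supp_fun Q)"
    by (simp_all add: sublinear_supp_fun supp_fun_nonneg continuous_on_supp_fun)
qed

lemma supp_fun_convex_body_io:
  assumes "convex_body_io K"
  shows "continuous_on UNIV (supp_fun K)" and "v \<in> sphere 0 1 \<Longrightarrow> 0 < supp_fun K v"
proof -
  have K: "bounded K" "K \<noteq> {}" "0 \<in> interior K"
    using assms compact_imp_bounded unfolding convex_body_io_def convex_body_def by auto
  then show "continuous_on UNIV (supp_fun K)" by (simp add: continuous_on_supp_fun)
  obtain e where "e > 0" "cball 0 e \<subseteq> K" using K(3) mem_interior_cball by blast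
  assume "v \<in> sphere 0 1"
  then have "inner (e *\<^sub>R v) v \<le> supp_fun K v"
    using \<open>cball 0 e \<subseteq> K\<close> \<open>e > 0\<close> K(1) by (intro supp_fun_upper) auto
  then show "0 < supp_fun K v" using \<open>v \<in> sphere 0 1\<close> \<open>e > 0\<close> by (simp add: inner_commute dot_square_norm)
qed

lemma continuous_on_supp_fun_powr:
  assumes "convex_body_o Q" and "0 < p" and "continuous_on UNIV g"
  shows "continuous_on UNIV (\<lambda>z. supp_fun Q (g z) powr p)"
proof (rule continuous_on_powr'[OF _ continuous_on_const])
  show "continuous_on UNIV (\<lambda>z. supp_fun Q (g z))"
    using continuous_on_compose2[OF supp_fun_convex_body_o(3)[OF assms(1)] assms(3)] by simp
qed (use supp_fun_convex_body_o(2)[OF assms(1)] assms(2) in auto)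

definition wulff_shape :: "('a::real_inner \<Rightarrow> real) \<Rightarrow> 'a set" where
  "wulff_shape H = {y. \<forall>x. inner y x \<le> H x}"

lemma convex_strict_epigraph_sublinear:
  assumes H: "sublinear H"
  shows "convex {(x, t). H x < t}"
  unfolding convex_def
proof (clarsimp)
  fix x1 t1 x2 t2 and u w :: real
  assume h: "H x1 < t1" "H x2 < t2" "0 \<le> u" "0 \<le> w" "u + w = 1"
  have "H (u *\<^sub>R x1 + w *\<^sub>R x2) \<le> u * H x1 + w * H x2"
    using sublinear_add[OF H, of "u *\<^sub>R x1" "w *\<^sub>R x2"] h by (simp add: sublinear_scaleR[OF H])
  also have "\<dots> < u * t1 + w * t2"
  proof -
    have "u * H x1 \<le> u * t1" "w * H x2 \<le> w * t2" using h by (auto intro: mult_left_mono)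
    moreover have "u > 0 \<or> w > 0" using h by auto
    ultimately show ?thesis using h by (auto intro: add_less_le_mono add_le_less_mono)
  qed
  finally show "H (u *\<^sub>R x1 + w *\<^sub>R x2) < u * t1 + w * t2" .
qed

lemma sublinear_epigraph_separation:
  fixes H :: "'a::euclidean_space \<Rightarrow> real"
  assumes H: "sublinear H"
  obtains c a b where "c > 0" "inner a v + c * H v \<le> b" "\<And>x t. H x < t \<Longrightarrow> b \<le> inner a x + c * t"
proof -
  let ?T = "{(x, t). H x < t} :: ('a \<times> real) set"
  have "(0, H 0 + 1) \<in> ?T" by simp
  then obtain a c b where "(a, c) \<noteq> 0" and S: "inner a v + c * H v \<le> b"
    and T: "\<And>x t. H x < t \<Longrightarrow> b \<le> inner a x + c * t"
    using separating_hyperplane_sets[OF convex_singleton convex_strict_epigraph_sublinear[OF H],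
        of "(v, H v)"]
    by (fastforce simp: inner_Pair)
  moreover have "c > 0"
  proof (rule ccontr)
    assume "\<not> c > 0"
    then consider "c < 0" | "c = 0" by linarith
    then show False
    proof cases
      case 1
      define t where "t = max (H v + 1) ((b - inner a v) / c + 1)"
      have "b \<le> inner a v + c * t" by (rule T) (simp add: t_def)
      moreover have "c * t \<le> c * ((b - inner a v) / c + 1)"
        using 1 unfolding t_def by (intro mult_left_mono_neg) auto
      moreover have "c * ((b - inner a v) / c + 1) = b - inner a v + c"
        using 1 by (simp add: field_simps)
      ultimately show False using 1 by linarith
    next
      case 2
      then have "a \<noteq> 0" using \<open>(a, c) \<noteq> 0\<close> by (auto simp: zero_prod_def)
      have "b \<le> inner a (v - a)" using T[of "v - a" "H (v - a) + 1"] 2 by simp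
      with S 2 have "inner a a \<le> 0" by (simp add: inner_diff_right)
      with \<open>a \<noteq> 0\<close> show False by (metis inner_gt_zero_iff not_le)
    qed
  qed
  ultimately show ?thesis using that by blast
qed

lemma sublinear_supporting_functional:
  fixes H :: "'a::euclidean_space \<Rightarrow> real"
  assumes H: "sublinear H"
  obtains y where "y \<in> wulff_shape H" "inner y v = H v"
proof -
  obtain c a b where "c > 0" and S: "inner a v + c * H v \<le> b"
    and T: "\<And>x t. H x < t \<Longrightarrow> b \<le> inner a x + c * t"
    by (rule sublinear_epigraph_separation[OF H, where v = v]) blast
  define y where "y = - (1 / c) *\<^sub>R a"
  have key: "H v - inner y v \<le> H x - inner y x" for x
  proof (rule field_le_epsilon)
    fix e :: real assume "e > 0"
    then have "(inner a v + c * H v) / c \<le> (inner a x + c * (H x + e)) / c"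
      using S T[of x "H x + e"] \<open>c > 0\<close> by (intro divide_right_mono) auto
    then show "H v - inner y v \<le> H x - inner y x + e"
      using \<open>c > 0\<close> unfolding y_def by (simp add: field_simps)
  qed
  have "H v - inner y v \<le> 0" using key[of 0] sublinear_zero[OF H] by simp
  moreover have "H v - inner y v \<ge> 0"
    using key[of "2 *\<^sub>R v"] sublinear_scaleR[OF H, of 2 v] by simp
  ultimately have "inner y v = H v" by simp
  moreover have "y \<in> wulff_shape H"
    using key \<open>inner y v = H v\<close> unfolding wulff_shape_def by (smt (verit) mem_Collect_eq)
  ultimately show ?thesis by (rule that[rotated])
qed

lemma supp_fun_wulff_shape:
  fixes H :: "'a::euclidean_space \<Rightarrow> real"
  assumes "sublinear H"
  shows "supp_fun (wulff_shape H) = H"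
proof
  fix v
  obtain y where "y \<in> wulff_shape H" "inner y v = H v"
    using sublinear_supporting_functional[OF assms] .
  then show "supp_fun (wulff_shape H) v = H v"
    unfolding supp_fun_def by (intro cSup_eq_maximum) (force, auto simp: wulff_shape_def)
qed

lemma polar_wulff_shape:
  fixes H :: "'a::euclidean_space \<Rightarrow> real"
  shows "sublinear H \<Longrightarrow> polar (wulff_shape H) = {x. H x \<le> 1}"
  unfolding polar_def by (simp add: supp_fun_wulff_shape)

lemma radial_fun_eq_ereal:
  assumes "a > 0" and "\<And>t. 0 < t \<Longrightarrow> t < a \<Longrightarrow> t *\<^sub>R y \<in> L"
    and "\<And>t. 0 < t \<Longrightarrow> t *\<^sub>R y \<in> L \<Longrightarrow> t \<le> a"
  shows "radial_fun L y = ereal a"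
  unfolding radial_fun_def
proof (rule antisym)
  show "(SUP t\<in>{t. t > 0 \<and> t *\<^sub>R y \<in> L}. ereal t) \<le> ereal a"
    using assms(3) by (intro SUP_least) auto
  show "ereal a \<le> (SUP t\<in>{t. t > 0 \<and> t *\<^sub>R y \<in> L}. ereal t)"
  proof (rule dense_le_bounded[of "ereal 0"])
    fix w assume w: "ereal 0 < w" "w < ereal a"
    then obtain t where "w = ereal t" by (cases w) auto
    with w assms(2) show "w \<le> (SUP t\<in>{t. t > 0 \<and> t *\<^sub>R y \<in> L}. ereal t)"
      by (intro SUP_upper2[of t]) auto
  qed (use assms(1) in simp)
qed

lemma radial_fun_eq_infinity:
  assumes "\<And>t. 0 < t \<Longrightarrow> t *\<^sub>R y \<in> L"
  shows "radial_fun L y = \<infinity>"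
  unfolding radial_fun_def
proof (rule SUP_PInfty)
  fix n :: nat
  show "\<exists>t\<in>{t. t > 0 \<and> t *\<^sub>R y \<in> L}. ereal (real n) \<le> ereal t"
    using assms by (intro bexI[of _ "real n + 1"]) auto
qed

lemma inverse_radial_fun_sublevel:
  assumes hom: "\<And>c. 0 < c \<Longrightarrow> H (c *\<^sub>R \<theta>) = c * H \<theta>" and "0 \<le> H \<theta>"
  shows "real_of_ereal (inverse (radial_fun {x. H x \<le> 1} \<theta>)) = H \<theta>"
proof (cases "H \<theta> = 0")
  case True
  then have "radial_fun {x. H x \<le> 1} \<theta> = \<infinity>"
    by (intro radial_fun_eq_infinity) (simp add: hom)
  then show ?thesis using True by simp
next
  case False
  with \<open>0 \<le> H \<theta>\<close> have "H \<theta> > 0" by simp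
  then have "radial_fun {x. H x \<le> 1} \<theta> = ereal (1 / H \<theta>)"
    by (intro radial_fun_eq_ereal) (auto simp: hom field_simps)
  then show ?thesis using \<open>H \<theta> > 0\<close> by simp
qed

section \<open>Minkowski's inequality\<close>

lemma powr_convex_combination_le:
  fixes x y u w p :: real
  assumes p: "p \<ge> 1" and "x \<ge> 0" "y \<ge> 0" "u \<ge> 0" "w \<ge> 0" and uw: "u + w = 1"
  shows "(u * x + w * y) powr p \<le> u * x powr p + w * y powr p"
proof -
  have scale: "(s * z) powr p \<le> s * z powr p" if "0 \<le> s" "s \<le> 1" "z \<ge> 0" for s z
  proof -
    have "s powr p \<le> s powr 1" using that p by (intro powr_mono') auto
    then have "s powr p * z powr p \<le> s * z powr p"
      using that by (cases "s = 0") (auto intro: mult_right_mono)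
    then show ?thesis using that by (simp add: powr_mult)
  qed
  consider "x = 0" | "y = 0" | "x > 0" "y > 0" using assms by linarith
  then show ?thesis
  proof cases
    case 1
    then show ?thesis using scale[of w y] assms by simp
  next
    case 2
    then show ?thesis using scale[of u x] assms by simp
  next
    case 3
    then show ?thesis
      using convex_onD[OF powr_convex[OF p], of w x y] assms uw by (simp add: eq_diff_eq[symmetric])
  qed
qed

text \<open>Convexity of \<open>t powr p\<close> with the weights \<open>A/(A+B)\<close> and \<open>B/(A+B)\<close>; integrated, with \<open>A\<close>
  and \<open>B\<close> slightly above the \<open>L^p\<close>-norms of the two summands, it gives Minkowski's inequality.\<close>
lemma powr_add_le_weighted:
  fixes a b A B p :: real
  assumes p: "p \<ge> 1" and "a \<ge> 0" "b \<ge> 0" "A > 0" "B > 0"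
  shows "(a + b) powr p \<le> (A + B) powr (p - 1) * (A powr (1 - p) * a powr p + B powr (1 - p) * b powr p)"
proof -
  define u w where "u = A / (A + B)" and "w = B / (A + B)"
  have uw: "u \<ge> 0" "w \<ge> 0" "u + w = 1"
    using assms unfolding u_def w_def by (auto simp: add_divide_distrib[symmetric])
  have "(a + b) / (A + B) = u * (a / A) + w * (b / B)"
    using assms unfolding u_def w_def by (simp add: add_divide_distrib)
  then have "((a + b) / (A + B)) powr p \<le> u * (a / A) powr p + w * (b / B) powr p"
    using powr_convex_combination_le[OF p _ _ uw, of "a / A" "b / B"] assms by simp
  then have "(a + b) powr p \<le> (A + B) powr p * (u * (a / A) powr p + w * (b / B) powr p)"
    using assms by (simp add: powr_divide divide_le_eq mult.commute)
  also have "\<dots> = (A + B) powr (p - 1) * (A powr (1 - p) * a powr p + B powr (1 - p) * b powr p)"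
  proof -
    have "(A + B) powr p = (A + B) powr (p - 1) * (A + B)" using assms by (simp add: powr_diff)
    then have "(A + B) powr p * (u * (a / A) powr p + w * (b / B) powr p) =
        (A + B) powr (p - 1) *
          ((A + B) * u * (a powr p / A powr p) + (A + B) * w * (b powr p / B powr p))"
      using assms by (simp add: powr_divide add_divide_distrib algebra_simps)
    moreover have "(A + B) * u = A" "(A + B) * w = B" using assms unfolding u_def w_def by simp_all
    moreover have "A * (a powr p / A powr p) = A powr (1 - p) * a powr p"
      "B * (b powr p / B powr p) = B powr (1 - p) * b powr p"
      using assms by (simp_all add: powr_diff)
    ultimately show ?thesis by simp
  qed
  finally show ?thesis .
qed

lemma powr_inverse_powr: "0 \<le> a \<Longrightarrow> 0 < p \<Longrightarrow> (a powr (1 / p)) powr p = (a :: real)"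
  by (cases "a = 0") (auto simp: powr_powr)

lemma le_powr_inverse_add_powr: "0 \<le> a \<Longrightarrow> 0 < p \<Longrightarrow> 0 \<le> e \<Longrightarrow> a \<le> (a powr (1 / p) + e) powr (p :: real)"
  using powr_mono2[of p "a powr (1 / p)" "a powr (1 / p) + e"] by (simp add: powr_inverse_powr)

lemma Minkowski_inequality:
  fixes M :: "'x measure" and f g h :: "'x \<Rightarrow> real" and p :: real
  assumes p: "p \<ge> 1"
    and nonneg: "\<And>x. f x \<ge> 0" "\<And>x. g x \<ge> 0" "\<And>x. h x \<ge> 0"
    and hfg: "\<And>x. h x \<le> f x + g x"
    and int: "integrable M (\<lambda>x. f x powr p)" "integrable M (\<lambda>x. g x powr p)"
      "integrable M (\<lambda>x. h x powr p)"
  shows "(\<integral>x. h x powr p \<partial>M) powr (1/p) \<le>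
           (\<integral>x. f x powr p \<partial>M) powr (1/p) + (\<integral>x. g x powr p \<partial>M) powr (1/p)"
proof -
  define If Ig Ih where "If = (\<integral>x. f x powr p \<partial>M)" and "Ig = (\<integral>x. g x powr p \<partial>M)"
    and "Ih = (\<integral>x. h x powr p \<partial>M)"
  have "If \<ge> 0" "Ig \<ge> 0" "Ih \<ge> 0" unfolding If_def Ig_def Ih_def by auto
  have "p > 0" using p by simp
  show ?thesis unfolding If_def[symmetric] Ig_def[symmetric] Ih_def[symmetric]
  proof (rule field_le_epsilon)
    fix e :: real assume "e > 0"
    define A B where "A = If powr (1/p) + e / 2" and "B = Ig powr (1/p) + e / 2"
    have "A > 0" "B > 0" using \<open>e > 0\<close> unfolding A_def B_def by (auto intro: add_nonneg_pos)
    have IfA: "If \<le> A powr p" and IgB: "Ig \<le> B powr p"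
      unfolding A_def B_def using \<open>If \<ge> 0\<close> \<open>Ig \<ge> 0\<close> \<open>p > 0\<close> \<open>e > 0\<close>
      by (simp_all add: le_powr_inverse_add_powr)
    have "Ih \<le> (\<integral>x. (A + B) powr (p - 1) * (A powr (1 - p) * f x powr p + B powr (1 - p) * g x powr p)
        \<partial>M)"
      unfolding Ih_def
    proof (rule integral_mono[OF int(3)])
      show "integrable M
          (\<lambda>x. (A + B) powr (p - 1) * (A powr (1 - p) * f x powr p + B powr (1 - p) * g x powr p))"
        using int by (intro integrable_mult_right integrable_add) auto
      fix x
      have "h x powr p \<le> (f x + g x) powr p" using nonneg hfg \<open>p > 0\<close> by (intro powr_mono2) auto
      also have "\<dots> \<le> (A + B) powr (p - 1) * (A powr (1 - p) * f x powr p + B powr (1 - p) * g x powr p)"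
        using nonneg \<open>A > 0\<close> \<open>B > 0\<close> by (intro powr_add_le_weighted[OF p]) auto
      finally show "h x powr p \<le> \<dots>" .
    qed
    also have "\<dots> = (A + B) powr (p - 1) * (A powr (1 - p) * If + B powr (1 - p) * Ig)"
      unfolding If_def Ig_def using int by simp
    also have "\<dots> \<le> (A + B) powr (p - 1) * (A powr (1 - p) * A powr p + B powr (1 - p) * B powr p)"
      using IfA IgB by (intro mult_left_mono add_mono) auto
    also have "\<dots> = (A + B) powr p"
      using \<open>A > 0\<close> \<open>B > 0\<close> by (simp add: powr_add[symmetric] powr_diff field_simps)
    finally have "Ih powr (1/p) \<le> ((A + B) powr p) powr (1/p)"
      using \<open>Ih \<ge> 0\<close> \<open>p > 0\<close> by (intro powr_mono2) auto
    also have "\<dots> = A + B" using \<open>A > 0\<close> \<open>B > 0\<close> \<open>p > 0\<close> by (simp add: powr_powr)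
    finally show "Ih powr (1/p) \<le> If powr (1/p) + Ig powr (1/p) + e" unfolding A_def B_def by simp
  qed
qed

lemma sublinear_Lp_norm:
  fixes M :: "'x measure" and F :: "'a::real_vector \<Rightarrow> 'x \<Rightarrow> real" and p :: real
  assumes p: "p \<ge> 1"
    and sub: "\<And>x. sublinear (\<lambda>v. F v x)" and nonneg: "\<And>v x. 0 \<le> F v x"
    and int: "\<And>v. integrable M (\<lambda>x. F v x powr p)"
  shows "sublinear (\<lambda>v. (\<integral>x. F v x powr p \<partial>M) powr (1/p))"
proof (rule sublinearI)
  fix v w
  show "(\<integral>x. F (v + w) x powr p \<partial>M) powr (1/p) \<le>
          (\<integral>x. F v x powr p \<partial>M) powr (1/p) + (\<integral>x. F w x powr p \<partial>M) powr (1/p)"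
    using sublinear_add[OF sub] by (intro Minkowski_inequality[OF p nonneg nonneg nonneg _ int int int])
next
  fix c :: real and v assume "0 \<le> c"
  have "(\<integral>x. F (c *\<^sub>R v) x powr p \<partial>M) = c powr p * (\<integral>x. F v x powr p \<partial>M)"
    using \<open>0 \<le> c\<close> nonneg by (simp add: sublinear_scaleR[OF sub] powr_mult)
  moreover have "(\<integral>x. F v x powr p \<partial>M) \<ge> 0" using nonneg by simp
  ultimately show "(\<integral>x. F (c *\<^sub>R v) x powr p \<partial>M) powr (1/p) = c * (\<integral>x. F v x powr p \<partial>M) powr (1/p)"
    using \<open>0 \<le> c\<close> p by (simp add: powr_mult powr_powr)
qed

section \<open>Polar coordinates\<close>

lemma normalize_measurable[measurable]:
  "(\<lambda>x::'a::euclidean_space. x /\<^sub>R norm x) \<in> borel_measurable borel"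
  by measurable

lemma sets_sphere_measure[simp, measurable_cong]:
  "sets (sphere_measure :: 'a::euclidean_space measure) = sets borel"
  by (simp add: sphere_measure_def)

lemma space_sphere_measure[simp]: "space (sphere_measure :: 'a::euclidean_space measure) = UNIV"
  by (simp add: sphere_measure_def)

lemma emeasure_sphere_measure:
  fixes A :: "'a::euclidean_space set"
  assumes A[measurable]: "A \<in> sets borel"
  shows "emeasure sphere_measure A =
    ennreal (real DIM('a)) * emeasure lborel {x. x /\<^sub>R norm x \<in> A \<and> norm x < 1}"
proof -
  have [measurable]: "{x::'a. x /\<^sub>R norm x \<in> A \<and> norm x < 1} \<in> sets borel" by measurable
  have [measurable]: "(\<lambda>x::'a. x /\<^sub>R norm x) -` A \<in> sets borel" "ball (0::'a) 1 \<in> sets borel"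
    using measurable_sets_borel[OF normalize_measurable A] by simp_all
  have "emeasure sphere_measure A = (\<integral>\<^sup>+x. (ennreal (real DIM('a)) * indicator (ball 0 1) x) *
      indicator ((\<lambda>x. x /\<^sub>R norm x) -` A) x \<partial>lborel)"
    unfolding sphere_measure_def by (simp add: emeasure_distr emeasure_density)
  also have "\<dots> = (\<integral>\<^sup>+x. ennreal (real DIM('a)) *
      indicator {x::'a. x /\<^sub>R norm x \<in> A \<and> norm x < 1} x \<partial>lborel)"
    by (intro nn_integral_cong) (auto split: split_indicator)
  finally show ?thesis by (simp add: nn_integral_cmult_indicator)
qed

lemma finite_measure_sphere_measure: "finite_measure (sphere_measure :: 'a::euclidean_space measure)"
proof (rule finite_measureI)
  have "{x::'a. x /\<^sub>R norm x \<in> UNIV \<and> norm x < 1} = ball 0 1" by auto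
  then show "emeasure (sphere_measure::'a measure) (space sphere_measure) \<noteq> \<infinity>"
    using emeasure_bounded_finite[of "ball (0::'a) 1"]
    by (simp add: emeasure_sphere_measure ennreal_mult_eq_top_iff)
qed

lemma AE_sphere_measure: "AE \<theta> in (sphere_measure :: 'a::euclidean_space measure). \<theta> \<in> sphere 0 1"
proof -
  have [measurable]: "ball (0::'a) 1 \<in> sets borel" by simp
  have "AE x in density lborel (\<lambda>x::'a. ennreal (real DIM('a)) * indicator (ball 0 1) x). x \<noteq> 0"
    using AE_lborel_singleton[of "0::'a"] by (subst AE_density) (auto elim!: AE_mp)
  then show ?thesis unfolding sphere_measure_def
    by (subst AE_distr_iff) (auto elim!: AE_mp)
qed

lemma emeasure_cone_scale:
  fixes A :: "'a::euclidean_space set"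
  assumes [measurable]: "A \<in> sets borel" and s: "s > 0"
  shows "emeasure lborel {x::'a. x /\<^sub>R norm x \<in> A \<and> norm x < s} =
         ennreal (s ^ DIM('a)) * emeasure lborel {x. x /\<^sub>R norm x \<in> A \<and> norm x < 1}"
proof -
  define C where "C r = {x::'a. x /\<^sub>R norm x \<in> A \<and> norm x < r}" for r
  have [measurable]: "C r \<in> sets borel" for r unfolding C_def by measurable
  have normalize_scale: "(s *\<^sub>R x) /\<^sub>R norm (s *\<^sub>R x) = x /\<^sub>R norm x" for x :: 'a
    using s by (cases "x = 0") (auto simp: field_simps)
  have cone: "indicator (C s) (s *\<^sub>R x) = (indicator (C 1) x :: ennreal)" for x :: 'a
    unfolding C_def indicator_def mem_Collect_eq normalize_scale using s by simp
  have "emeasure lborel (C s) = emeasure (density (distr lborel borel (\<lambda>x::'a. 0 + s *\<^sub>R x))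
      (\<lambda>_. \<bar>s\<bar> ^ DIM('a))) (C s)"
    using s by (subst (1) lborel_affine[of s 0]) auto
  also have "\<dots> = (\<integral>\<^sup>+x. ennreal (\<bar>s\<bar> ^ DIM('a)) * indicator (C s) (0 + s *\<^sub>R x) \<partial>lborel)"
    by (simp add: emeasure_density nn_integral_distr)
  also have "\<dots> = ennreal (s ^ DIM('a)) * emeasure lborel (C 1)"
    using s by (simp add: cone nn_integral_cmult_indicator)
  finally show ?thesis unfolding C_def .
qed

lemma emeasure_cone_ball:
  fixes A :: "'a::euclidean_space set"
  assumes A: "A \<in> sets borel" and s: "s > 0"
  shows "emeasure lborel {x::'a. x /\<^sub>R norm x \<in> A \<and> norm x < s} =
         ennreal (s ^ DIM('a) / DIM('a)) * emeasure sphere_measure A"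
proof -
  have "ennreal (s ^ DIM('a)) = ennreal (s ^ DIM('a) / DIM('a)) * ennreal (real DIM('a))"
    using s by (simp flip: ennreal_mult'')
  then show ?thesis
    unfolding emeasure_cone_scale[OF A s] emeasure_sphere_measure[OF A] by (simp add: mult.assoc)
qed

lemma nn_integral_powr_lessThan:
  fixes a c :: real
  assumes a: "a > -1" and c: "c \<ge> 0"
  shows "(\<integral>\<^sup>+r. ennreal (indicator {0<..} r * r powr a) * indicator {..<c} r \<partial>lborel) =
         ennreal (c powr (a + 1) / (a + 1))"
proof -
  have "(\<integral>\<^sup>+r. ennreal (indicator {0<..} r * r powr a) * indicator {..<c} r \<partial>lborel) =
        (\<integral>\<^sup>+r. ennreal (indicator {0..c} r * r powr a) \<partial>lborel)"
    using AE_lborel_singleton[of 0] AE_lborel_singleton[of c]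
    by (intro nn_integral_cong_AE, eventually_elim) (auto split: split_indicator)
  also have "\<dots> = ennreal (c powr (a + 1) / (a + 1))"
    by (rule nn_integral_has_integral_lebesgue) (use has_integral_powr_from_0[OF a c] in auto)
  finally show ?thesis .
qed

lemma nn_integral_power_lessThan:
  assumes "s > 0"
  shows "(\<integral>\<^sup>+r. ennreal (indicator {0<..} r * r ^ (DIM('a::euclidean_space) - 1)) * indicator {..<s} r
      \<partial>lborel) = ennreal (s ^ DIM('a) / DIM('a))"
proof -
  obtain k where k: "DIM('a) - 1 = k" by simp
  then have D: "real k + 1 = real DIM('a)" using DIM_positive[where 'a='a] by linarith
  have "(\<integral>\<^sup>+r. ennreal (indicator {0<..} r * r ^ k) * indicator {..<s} r \<partial>lborel) =
      (\<integral>\<^sup>+r. ennreal (indicator {0<..} r * r powr real k) * indicator {..<s} r \<partial>lborel)"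
    by (intro nn_integral_cong) (auto split: split_indicator simp: powr_realpow)
  also have "\<dots> = ennreal (s powr real DIM('a) / DIM('a))"
    using assms by (subst nn_integral_powr_lessThan) (auto simp: D)
  finally show ?thesis using assms k by (simp add: powr_realpow)
qed

lemma emeasure_cone_lessThan:
  fixes A :: "'a::euclidean_space set"
  assumes A: "A \<in> sets borel"
  shows "emeasure lborel {x::'a. x /\<^sub>R norm x \<in> A \<and> norm x < s} = emeasure sphere_measure A *
    (\<integral>\<^sup>+r. ennreal (indicator {0<..} r * r ^ (DIM('a) - 1)) * indicator {..<s} r \<partial>lborel)"
proof (cases "s > 0")
  case False
  then have "{x::'a. x /\<^sub>R norm x \<in> A \<and> norm x < s} = {}"
    by (auto simp: not_less intro: order_trans[OF _ norm_ge_zero])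
  moreover have
    "(\<integral>\<^sup>+r. ennreal (indicator {0<..} r * r ^ (DIM('a) - 1)) * indicator {..<s} r \<partial>lborel) = 0"
    using False by (subst nn_integral_0_iff_AE[THEN iffD2]) (auto split: split_indicator)
  ultimately show ?thesis by (simp only: emeasure_empty mult_zero_right)
next
  case True
  then show ?thesis
    unfolding nn_integral_power_lessThan[OF True] emeasure_cone_ball[OF A True] by (simp add: mult.commute)
qed

lemma distr_norm_cone:
  fixes A :: "'a::euclidean_space set"
  assumes A[measurable]: "A \<in> sets borel"
  shows "distr (density lborel (indicator {x::'a. x /\<^sub>R norm x \<in> A})) borel norm =
         density lborel
           (\<lambda>r. emeasure sphere_measure A * ennreal (indicator {0<..} r * r ^ (DIM('a) - 1)))"
    (is "?N = ?R")
proof (rule measure_eqI_generator_eq_countable[where E="range lessThan" and \<Omega>=UNIV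
      and A="range (\<lambda>n::nat. {..<real n})"])
  have [measurable]: "{x::'a. x /\<^sub>R norm x \<in> A} \<in> sets borel"
    "\<And>s. {x::'a. x /\<^sub>R norm x \<in> A \<and> norm x < s} \<in> sets borel"
    by measurable
  have N: "emeasure ?N {..<s} = emeasure lborel {x::'a. x /\<^sub>R norm x \<in> A \<and> norm x < s}" for s
  proof -
    have [measurable]: "norm -` {..<s} \<in> sets (borel :: 'a measure)"
      using measurable_sets_borel[of norm borel "{..<s}"] by simp
    have "emeasure ?N {..<s} =
        (\<integral>\<^sup>+x. indicator {x::'a. x /\<^sub>R norm x \<in> A} x * indicator (norm -` {..<s}) x \<partial>lborel)"
      by (simp add: emeasure_distr emeasure_density)
    also have "\<dots> = (\<integral>\<^sup>+x. indicator {x::'a. x /\<^sub>R norm x \<in> A \<and> norm x < s} x \<partial>lborel)"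
      by (intro nn_integral_cong) (auto split: split_indicator)
    finally show ?thesis by simp
  qed
  show "emeasure ?N X = emeasure ?R X" if "X \<in> range lessThan" for X
  proof -
    obtain s where X: "X = {..<s}" using \<open>X \<in> range lessThan\<close> by auto
    show ?thesis unfolding X N emeasure_cone_lessThan[OF A]
      by (simp add: emeasure_density nn_integral_cmult[symmetric] mult.assoc)
  qed
  show "Int_stable (range lessThan :: real set set)"
    by (auto simp: Int_stable_def intro: range_eqI[of _ _ "min _ _"])
  show "emeasure ?N a \<noteq> \<infinity>" if "a \<in> range (\<lambda>n::nat. {..<real n})" for a
  proof -
    obtain n where a: "a = {..<real n}" using \<open>a \<in> range _\<close> by auto
    have "emeasure lborel {x::'a. x /\<^sub>R norm x \<in> A \<and> norm x < real n} \<le> emeasure lborel (ball (0::'a) n)"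
      by (intro emeasure_mono) auto
    then show ?thesis
      unfolding a N using emeasure_bounded_finite[of "ball (0::'a) n"] by (auto simp: top_unique)
  qed
qed (auto simp: borel_Iio intro: reals_Archimedean2)

lemma pair_measure_sphere_radial:
  defines "R \<equiv> density lborel (\<lambda>r. ennreal (indicator {0<..} r * r ^ (DIM('a::euclidean_space) - 1)))"
  shows "(sphere_measure :: 'a measure) \<Otimes>\<^sub>M R =
    distr lborel (borel \<Otimes>\<^sub>M borel) (\<lambda>x. (x /\<^sub>R norm x, norm x))"
proof (rule pair_measure_eqI)
  show "sigma_finite_measure R"
    unfolding R_def
    by (subst sigma_finite_measure.sigma_finite_iff_density_finite'[OF sigma_finite_lborel]) auto
  show "sigma_finite_measure (sphere_measure :: 'a measure)"
    by (rule finite_measure.axioms(1)[OF finite_measure_sphere_measure])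
  show "sets (sphere_measure \<Otimes>\<^sub>M R) =
      sets (distr lborel (borel \<Otimes>\<^sub>M borel) (\<lambda>x::'a. (x /\<^sub>R norm x, norm x)))"
    unfolding R_def by (simp cong: sets_pair_measure_cong)
  fix A B assume "A \<in> sets (sphere_measure :: 'a measure)" "B \<in> sets R"
  then have [measurable]: "A \<in> sets borel" "B \<in> sets borel" unfolding R_def by auto
  have [measurable]: "norm -` B \<in> sets (borel :: 'a measure)"
    using measurable_sets_borel[of norm borel B] by simp
  have cone_B: "{x::'a. x /\<^sub>R norm x \<in> A} \<inter> norm -` B \<in> sets lborel" by measurable
  have "emeasure (distr lborel (borel \<Otimes>\<^sub>M borel) (\<lambda>x::'a. (x /\<^sub>R norm x, norm x))) (A \<times> B) =
      emeasure lborel ({x::'a. x /\<^sub>R norm x \<in> A} \<inter> norm -` B)"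
    by (subst emeasure_distr) (auto intro!: arg_cong2[where f=emeasure])
  also have "\<dots> = (\<integral>\<^sup>+x. indicator {x::'a. x /\<^sub>R norm x \<in> A} x * indicator (norm -` B) x \<partial>lborel)"
    using cone_B by (simp flip: nn_integral_indicator add: indicator_inter_arith)
  also have "\<dots> = emeasure (distr (density lborel (indicator {x::'a. x /\<^sub>R norm x \<in> A})) borel norm) B"
    by (simp add: emeasure_distr emeasure_density)
  also have "\<dots> = emeasure sphere_measure A * emeasure R B"
    unfolding distr_norm_cone[OF \<open>A \<in> sets borel\<close>] R_def
    by (simp add: emeasure_density nn_integral_cmult[symmetric] mult.assoc)
  finally show "emeasure sphere_measure A * emeasure R B =
      emeasure (distr lborel (borel \<Otimes>\<^sub>M borel) (\<lambda>x::'a. (x /\<^sub>R norm x, norm x))) (A \<times> B)" ..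
qed

lemma nn_integral_polar_coordinates:
  fixes f :: "'a::euclidean_space \<Rightarrow> ennreal"
  assumes f[measurable]: "f \<in> borel_measurable borel"
  shows "(\<integral>\<^sup>+x. f x \<partial>lborel) =
    (\<integral>\<^sup>+\<theta>. (\<integral>\<^sup>+r. ennreal (indicator {0<..} r * r ^ (DIM('a) - 1)) * f (r *\<^sub>R \<theta>) \<partial>lborel)
      \<partial>sphere_measure)"
proof -
  define R where "R = density lborel (\<lambda>r. ennreal (indicator {0<..} r * r ^ (DIM('a) - 1)))"
  have sets_R[simp]: "sets R = sets borel" unfolding R_def by simp
  interpret pair_sigma_finite "sphere_measure :: 'a measure" R
    unfolding R_def
    by (intro pair_sigma_finite.intro finite_measure.axioms(1)[OF finite_measure_sphere_measure]
        sigma_finite_measure.sigma_finite_iff_density_finite'[OF sigma_finite_lborel, THEN iffD2]) auto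
  have [measurable]: "(\<lambda>(\<theta>, r). f (r *\<^sub>R \<theta>)) \<in> borel_measurable (sphere_measure \<Otimes>\<^sub>M R)"
    by (simp add: measurable_cong_sets[OF sets_pair_measure_cong[OF sets_sphere_measure sets_R] refl])
  have "(\<lambda>(\<theta>, r). f (r *\<^sub>R \<theta>)) (x /\<^sub>R norm x, norm x) = f x" for x :: 'a
    by (cases "x = 0") simp_all
  then have "(\<integral>\<^sup>+x. f x \<partial>lborel) = (\<integral>\<^sup>+x. (\<lambda>(\<theta>, r). f (r *\<^sub>R \<theta>)) (x /\<^sub>R norm x, norm x) \<partial>lborel)"
    by simp
  also have "\<dots> = (\<integral>\<^sup>+y. (\<lambda>(\<theta>, r). f (r *\<^sub>R \<theta>)) y \<partial>(sphere_measure \<Otimes>\<^sub>M R))"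
    unfolding R_def pair_measure_sphere_radial by (simp add: nn_integral_distr)
  also have "\<dots> = (\<integral>\<^sup>+\<theta>. (\<integral>\<^sup>+r. f (r *\<^sub>R \<theta>) \<partial>R) \<partial>sphere_measure)"
    by (subst M2.nn_integral_fst[symmetric]) simp_all
  finally show ?thesis unfolding R_def by (simp add: nn_integral_density)
qed

section \<open>Star bodies\<close>

lemma star_body_ray:
  fixes L :: "'a::euclidean_space set"
  assumes L: "star_body L" and u: "u \<in> sphere 0 1"
  obtains \<rho> where "radial_fun L u = ereal \<rho>" "\<rho> > 0"
    "\<And>t. 0 < t \<Longrightarrow> t < \<rho> \<Longrightarrow> t *\<^sub>R u \<in> L" "\<And>t. 0 < t \<Longrightarrow> t *\<^sub>R u \<in> L \<Longrightarrow> t \<le> \<rho>"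
proof -
  from L u have pos: "0 < radial_fun L u" "radial_fun L u < \<infinity>" by (auto simp: star_body_def)
  then obtain \<rho> where \<rho>: "radial_fun L u = ereal \<rho>" by (cases "radial_fun L u") auto
  with pos have "\<rho> > 0" by simp
  have le: "t \<le> \<rho>" if "0 < t" "t *\<^sub>R u \<in> L" for t
  proof -
    have "ereal t \<le> radial_fun L u" unfolding radial_fun_def by (rule SUP_upper) (use that in auto)
    with \<rho> show ?thesis by simp
  qed
  have mem: "t *\<^sub>R u \<in> L" if t: "0 < t" "t < \<rho>" for t
  proof -
    have "ereal t < radial_fun L u" using \<rho> t by simp
    then obtain s where s: "s > 0" "s *\<^sub>R u \<in> L" "t < s"
      unfolding radial_fun_def less_SUP_iff by auto
    then have "t / s \<in> {0..1}" using t by auto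
    then have "(t / s) *\<^sub>R (s *\<^sub>R u) \<in> L" using L s unfolding star_body_def by blast
    then show ?thesis using s by simp
  qed
  show ?thesis using \<rho> \<open>\<rho> > 0\<close> le mem that by blast
qed

lemma radial_fun_star_body_scale:
  fixes L :: "'a::euclidean_space set"
  assumes L: "star_body L" and "\<theta> \<noteq> 0"
  shows "radial_fun L \<theta> = ereal (real_of_ereal (radial_fun L (\<theta> /\<^sub>R norm \<theta>)) / norm \<theta>)"
proof -
  let ?u = "\<theta> /\<^sub>R norm \<theta>" and ?c = "norm \<theta>"
  have "?u \<in> sphere 0 1" "?c > 0" using \<open>\<theta> \<noteq> 0\<close> by auto
  obtain \<rho> where \<rho>: "radial_fun L ?u = ereal \<rho>" "\<rho> > 0"
    and mem: "\<And>t. 0 < t \<Longrightarrow> t < \<rho> \<Longrightarrow> t *\<^sub>R ?u \<in> L"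
    and le: "\<And>t. 0 < t \<Longrightarrow> t *\<^sub>R ?u \<in> L \<Longrightarrow> t \<le> \<rho>"
    using star_body_ray[OF L \<open>?u \<in> sphere 0 1\<close>] by blast
  have \<theta>: "t *\<^sub>R \<theta> = (t * ?c) *\<^sub>R ?u" for t using \<open>?c > 0\<close> by simp
  have "radial_fun L \<theta> = ereal (\<rho> / ?c)"
  proof (rule radial_fun_eq_ereal)
    show "\<rho> / ?c > 0" using \<rho> \<open>?c > 0\<close> by simp
    show "t *\<^sub>R \<theta> \<in> L" if "0 < t" "t < \<rho> / ?c" for t
    proof -
      have "(t * ?c) *\<^sub>R ?u \<in> L" using that \<open>?c > 0\<close> by (intro mem) (auto simp: field_simps)
      then show ?thesis by (metis \<theta>)
    qed
    show "t \<le> \<rho> / ?c" if "0 < t" "t *\<^sub>R \<theta> \<in> L" for t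
    proof -
      have "t * ?c \<le> \<rho>" using that \<open>?c > 0\<close> by (intro le) (simp, metis \<theta>)
      then show ?thesis using \<open>?c > 0\<close> by (simp add: field_simps)
    qed
  qed
  then show ?thesis using \<rho> by simp
qed

lemma borel_measurable_radial_fun:
  fixes L :: "'a::euclidean_space set"
  assumes L: "star_body L"
  shows "(\<lambda>\<theta>. real_of_ereal (radial_fun L \<theta>)) \<in> borel_measurable borel"
proof -
  let ?r = "\<lambda>u. real_of_ereal (radial_fun L u)"
  have "0 \<in> L" using L interior_subset unfolding star_body_def by blast
  then have "radial_fun L 0 = \<infinity>"
    using L unfolding star_body_def by (intro radial_fun_eq_infinity) simp
  \<comment> \<open>\<open>real_of_ereal \<infinity> = 0\<close>, so the formula below also holds at the origin\<close>
  then have r: "?r \<theta> = (if \<theta> = 0 then 0 else ?r (\<theta> /\<^sub>R norm \<theta>) / norm \<theta>)" for \<theta>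
    by (cases "\<theta> = 0") (simp_all add: radial_fun_star_body_scale[OF L, of \<theta>])
  have "continuous_on (sphere 0 1) ?r" using L by (simp add: star_body_def)
  then have [measurable]: "(\<lambda>u. indicator (sphere (0::'a) 1) u *\<^sub>R ?r u) \<in> borel_measurable borel"
    by (intro borel_measurable_continuous_on_indicator) simp_all
  have "(\<lambda>\<theta>::'a. if \<theta> = 0 then 0 else
      (indicator (sphere 0 1) (\<theta> /\<^sub>R norm \<theta>) *\<^sub>R ?r (\<theta> /\<^sub>R norm \<theta>)) / norm \<theta>) \<in> borel_measurable borel"
    by measurable
  also have "(\<lambda>\<theta>::'a. if \<theta> = 0 then 0 else
      (indicator (sphere 0 1) (\<theta> /\<^sub>R norm \<theta>) *\<^sub>R ?r (\<theta> /\<^sub>R norm \<theta>)) / norm \<theta>) = ?r"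
    by (rule ext, subst (2) r) auto
  finally show ?thesis .
qed

lemma nn_integral_star_body_ray:
  fixes L :: "'a::euclidean_space set" and g :: "'a \<Rightarrow> real" and p :: real
  assumes L: "star_body L" and \<theta>: "\<theta> \<in> sphere 0 1" and g0: "\<And>x. g x \<ge> 0"
    and hom: "\<And>x r. r > 0 \<Longrightarrow> g (r *\<^sub>R x) = r powr p * g x" and p: "p \<ge> 0"
  shows "(\<integral>\<^sup>+r. ennreal (indicator {0<..} r * r ^ (DIM('a) - 1)) *
        (indicator L (r *\<^sub>R \<theta>) * ennreal (g (r *\<^sub>R \<theta>))) \<partial>lborel) =
      ennreal (real_of_ereal (radial_fun L \<theta>) powr (DIM('a) + p) / (DIM('a) + p) * g \<theta>)"
proof -
  obtain k where k: "DIM('a) - 1 = k" by simp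
  then have kD: "real k + p + 1 = DIM('a) + p" using DIM_positive[where 'a='a] by linarith
  obtain \<rho> where \<rho>: "radial_fun L \<theta> = ereal \<rho>" "\<rho> > 0"
    and mem: "\<And>t. 0 < t \<Longrightarrow> t < \<rho> \<Longrightarrow> t *\<^sub>R \<theta> \<in> L"
    and le: "\<And>t. 0 < t \<Longrightarrow> t *\<^sub>R \<theta> \<in> L \<Longrightarrow> t \<le> \<rho>"
    using star_body_ray[OF L \<theta>] by blast
  have "ennreal (indicator {0<..} r * r ^ k) * (indicator L (r *\<^sub>R \<theta>) * ennreal (g (r *\<^sub>R \<theta>))) =
      ennreal (g \<theta>) * (ennreal (indicator {0<..} r * r powr (real k + p)) * indicator {..<\<rho>} r)"
    if "r \<noteq> \<rho>" for r
  proof -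
    consider "r \<le> 0" | "0 < r" "r < \<rho>" | "\<rho> < r" using \<open>r \<noteq> \<rho>\<close> by fastforce
    then show ?thesis
    proof cases
      case 2
      then have "r ^ k * (r powr p * g \<theta>) = g \<theta> * r powr (real k + p)"
        by (simp add: powr_add powr_realpow)
      then show ?thesis using 2 mem[of r] hom[of r \<theta>]
        by (simp add: indicator_def ennreal_mult'[symmetric] g0 mult.commute)
    next
      case 3
      then have "r *\<^sub>R \<theta> \<notin> L" using le[of r] \<rho>(2) by force
      then show ?thesis using 3 by (simp add: indicator_def)
    qed (simp add: indicator_def)
  qed
  then have "(\<integral>\<^sup>+r. ennreal (indicator {0<..} r * r ^ k) *
        (indicator L (r *\<^sub>R \<theta>) * ennreal (g (r *\<^sub>R \<theta>))) \<partial>lborel) =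
      (\<integral>\<^sup>+r. ennreal (g \<theta>) * (ennreal (indicator {0<..} r * r powr (real k + p)) * indicator {..<\<rho>} r)
        \<partial>lborel)"
    using AE_lborel_singleton[of \<rho>] by (intro nn_integral_cong_AE) (auto elim!: AE_mp)
  also have "\<dots> = ennreal (g \<theta>) * ennreal (\<rho> powr (real k + p + 1) / (real k + p + 1))"
    using \<rho> p by (simp add: nn_integral_cmult nn_integral_powr_lessThan)
  also have "\<dots> = ennreal (real_of_ereal (radial_fun L \<theta>) powr (DIM('a) + p) / (DIM('a) + p) * g \<theta>)"
    unfolding kD using \<rho> p g0[of \<theta>] by (simp add: ennreal_mult'[symmetric] mult.commute)
  finally show ?thesis unfolding k .
qed

lemma nn_integral_star_body_homogeneous:
  fixes L :: "'a::euclidean_space set" and g :: "'a \<Rightarrow> real" and p :: real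
  assumes L: "star_body L" and [measurable]: "g \<in> borel_measurable borel" and g0: "\<And>x. g x \<ge> 0"
    and hom: "\<And>x r. r > 0 \<Longrightarrow> g (r *\<^sub>R x) = r powr p * g x" and p: "p \<ge> 0"
  shows "(\<integral>\<^sup>+x. indicator L x * ennreal (g x) \<partial>lborel) =
     (\<integral>\<^sup>+\<theta>. ennreal (real_of_ereal (radial_fun L \<theta>) powr (DIM('a) + p) / (DIM('a) + p) * g \<theta>)
        \<partial>sphere_measure)"
proof -
  have [measurable]: "L \<in> sets borel" using L by (simp add: star_body_def borel_compact)
  have "(\<integral>\<^sup>+x. indicator L x * ennreal (g x) \<partial>lborel) =
    (\<integral>\<^sup>+\<theta>. (\<integral>\<^sup>+r. ennreal (indicator {0<..} r * r ^ (DIM('a) - 1)) *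
        (indicator L (r *\<^sub>R \<theta>) * ennreal (g (r *\<^sub>R \<theta>))) \<partial>lborel) \<partial>sphere_measure)"
    by (rule nn_integral_polar_coordinates) measurable
  also have "\<dots> = (\<integral>\<^sup>+\<theta>. ennreal (real_of_ereal (radial_fun L \<theta>) powr (DIM('a) + p) / (DIM('a) + p) * g \<theta>)
        \<partial>sphere_measure)"
    by (rule nn_integral_cong_AE, rule AE_mp[OF AE_sphere_measure], rule AE_I2, rule impI,
        rule nn_integral_star_body_ray[OF L _ g0 hom p])
  finally show ?thesis .
qed

lemma nn_integral_sphere_radial_powr:
  fixes L :: "'a::euclidean_space set" and g :: "'a \<Rightarrow> real" and p :: real
  assumes L: "star_body L" and [measurable]: "g \<in> borel_measurable borel" and g0: "\<And>x. g x \<ge> 0"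
    and hom: "\<And>x r. r > 0 \<Longrightarrow> g (r *\<^sub>R x) = r powr p * g x" and p: "p \<ge> 0"
    and int: "set_integrable lborel L g"
  shows "(\<integral>\<^sup>+\<theta>. ennreal (real_of_ereal (radial_fun L \<theta>) powr (DIM('a) + p) * g \<theta>) \<partial>sphere_measure) =
    ennreal ((DIM('a) + p) * (LINT x:L|lborel. g x))"
proof -
  let ?\<rho> = "\<lambda>\<theta>. real_of_ereal (radial_fun L \<theta>) powr (DIM('a) + p)" and ?d = "real DIM('a) + p"
  have "?d > 0" using p by (simp add: add_pos_nonneg)
  have [measurable]: "(\<lambda>\<theta>. real_of_ereal (radial_fun L \<theta>)) \<in> borel_measurable borel"
    by (rule borel_measurable_radial_fun[OF L])
  have "(\<integral>\<^sup>+\<theta>. ennreal (?\<rho> \<theta> * g \<theta>) \<partial>sphere_measure) =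
      (\<integral>\<^sup>+\<theta>. ennreal ?d * ennreal (?\<rho> \<theta> / ?d * g \<theta>) \<partial>sphere_measure)"
    using \<open>?d > 0\<close> by (intro nn_integral_cong) (simp flip: ennreal_mult')
  also have "\<dots> = ennreal ?d * (\<integral>\<^sup>+\<theta>. ennreal (?\<rho> \<theta> / ?d * g \<theta>) \<partial>sphere_measure)"
    by (rule nn_integral_cmult) measurable
  also have "(\<integral>\<^sup>+\<theta>. ennreal (?\<rho> \<theta> / ?d * g \<theta>) \<partial>sphere_measure) =
      (\<integral>\<^sup>+x. indicator L x * ennreal (g x) \<partial>lborel)"
    by (rule nn_integral_star_body_homogeneous[OF L _ g0 hom p, symmetric]) measurable
  also have "\<dots> = ennreal (LINT x:L|lborel. g x)"
    using int g0 unfolding set_integrable_def set_lebesgue_integral_def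
    by (subst nn_integral_eq_integral[symmetric]) (auto intro!: nn_integral_cong split: split_indicator)
  finally show ?thesis using \<open>?d > 0\<close> by (simp add: ennreal_mult')
qed

lemma integral_sphere_radial_Fubini:
  fixes L :: "'a::euclidean_space set" and M :: "'b measure" and f :: "'a \<Rightarrow> 'b \<Rightarrow> real"
    and p :: real
  assumes L: "star_body L" and M: "sigma_finite_measure M" and p: "0 \<le> p"
    and f_meas: "(\<lambda>(x, v). f x v) \<in> borel_measurable (borel \<Otimes>\<^sub>M M)"
    and nonneg: "\<And>x v. 0 \<le> f x v"
    and hom: "\<And>r x v. 0 < r \<Longrightarrow> f (r *\<^sub>R x) v = r powr p * f x v"
    and int_M: "\<And>x. integrable M (f x)"
    and int_L: "\<And>v. set_integrable lborel L (\<lambda>x. f x v)"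
  shows "(\<integral>\<theta>. real_of_ereal (radial_fun L \<theta>) powr (DIM('a) + p) * (\<integral>v. f \<theta> v \<partial>M) \<partial>sphere_measure) =
    (DIM('a) + p) * (\<integral>v. (LINT x:L|lborel. f x v) \<partial>M)"
proof -
  let ?\<rho> = "\<lambda>\<theta>. real_of_ereal (radial_fun L \<theta>) powr (DIM('a) + p)"
  interpret M: sigma_finite_measure M by (fact M)
  interpret pair_sigma_finite "sphere_measure :: 'a measure" M
    by (intro pair_sigma_finite.intro M finite_measure.axioms(1)[OF finite_measure_sphere_measure])
  have [measurable]: "L \<in> sets borel" using L by (simp add: star_body_def borel_compact)
  have [measurable]: "(\<lambda>\<theta>. real_of_ereal (radial_fun L \<theta>)) \<in> borel_measurable borel"
    by (rule borel_measurable_radial_fun[OF L])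
  have f_sphere[measurable]: "(\<lambda>(\<theta>, v). f \<theta> v) \<in> borel_measurable (sphere_measure \<Otimes>\<^sub>M M)"
    using f_meas
    by (simp add: measurable_cong_sets[OF sets_pair_measure_cong[OF sets_sphere_measure refl] refl])
  have f_lborel: "(\<lambda>(v, x). indicator L x *\<^sub>R f x v) \<in> borel_measurable (M \<Otimes>\<^sub>M lborel)"
  proof -
    have "(\<lambda>(v, x). f x v) \<in> borel_measurable (M \<Otimes>\<^sub>M lborel)"
      using measurable_pair_swap[OF f_meas]
      by (simp add: measurable_cong_sets[OF sets_pair_measure_cong[OF refl sets_lborel] refl])
    then show ?thesis by measurable
  qed
  have inner_M: "ennreal (?\<rho> \<theta> * (\<integral>v. f \<theta> v \<partial>M)) = (\<integral>\<^sup>+v. ennreal (?\<rho> \<theta> * f \<theta> v) \<partial>M)" for \<theta>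
    using nonneg by (simp add: nn_integral_eq_integral[OF integrable_mult_right[OF int_M]])
  have inner_sphere: "(\<integral>\<^sup>+\<theta>. ennreal (?\<rho> \<theta> * f \<theta> v) \<partial>sphere_measure) =
      ennreal ((DIM('a) + p) * (LINT x:L|lborel. f x v))" if "v \<in> space M" for v
    using measurable_Pair1[OF f_meas that] nonneg hom p int_L
    by (intro nn_integral_sphere_radial_powr[OF L]) auto
  have "(\<integral>\<theta>. ?\<rho> \<theta> * (\<integral>v. f \<theta> v \<partial>M) \<partial>sphere_measure) =
      enn2real (\<integral>\<^sup>+\<theta>. ennreal (?\<rho> \<theta> * (\<integral>v. f \<theta> v \<partial>M)) \<partial>sphere_measure)"
    using nonneg M.borel_measurable_lebesgue_integral[OF f_sphere]
    by (intro integral_eq_nn_integral) auto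
  also have "\<dots> = enn2real (\<integral>\<^sup>+\<theta>. (\<integral>\<^sup>+v. ennreal (?\<rho> \<theta> * f \<theta> v) \<partial>M) \<partial>sphere_measure)"
    by (simp only: inner_M)
  also have "\<dots> = enn2real (\<integral>\<^sup>+v. (\<integral>\<^sup>+\<theta>. ennreal (?\<rho> \<theta> * f \<theta> v) \<partial>sphere_measure) \<partial>M)"
    using Fubini[of "\<lambda>(\<theta>, v). ennreal (?\<rho> \<theta> * f \<theta> v)"] by simp
  also have "\<dots> = enn2real (\<integral>\<^sup>+v. ennreal ((DIM('a) + p) * (LINT x:L|lborel. f x v)) \<partial>M)"
    by (simp add: inner_sphere cong: nn_integral_cong)
  also have "\<dots> = (\<integral>v. (DIM('a) + p) * (LINT x:L|lborel. f x v) \<partial>M)"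
    using nonneg p
      sigma_finite_measure.borel_measurable_lebesgue_integral[OF sigma_finite_lborel f_lborel]
    by (intro integral_eq_nn_integral[symmetric])
       (auto simp: set_lebesgue_integral_def intro!: AE_I2 mult_nonneg_nonneg integral_nonneg_AE)
  finally show ?thesis by simp
qed

section \<open>Finiteness of the surface area measure\<close>

lemma hausdorff_outer_mono: "A \<subseteq> B \<Longrightarrow> hausdorff_outer s A \<le> hausdorff_outer s B"
  unfolding hausdorff_outer_def by (intro SUP_mono bexI[rotated] INF_superset_mono) auto

lemma hausdorff_outer_empty: "hausdorff_outer s ({} :: 'a::euclidean_space set) = 0"
  unfolding hausdorff_outer_def
  by (intro antisym SUP_least INF_lower2[of "\<lambda>_. {}"]) auto

lemma hausdorff_outer_le_finite_cover:
  fixes A :: "'a::euclidean_space set"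
  assumes cover: "\<And>\<delta>. \<delta> > 0 \<Longrightarrow> \<exists>I (C :: 'i \<Rightarrow> 'a set). finite I \<and> A \<subseteq> (\<Union>i\<in>I. C i) \<and>
      (\<forall>i\<in>I. bounded (C i) \<and> diameter (C i) \<le> \<delta>) \<and>
      (\<Sum>i\<in>I. unit_ball_vol (real s) * (diameter (C i) / 2) ^ s) \<le> B"
  shows "hausdorff_outer s A \<le> ennreal B"
  unfolding hausdorff_outer_def
proof (rule SUP_least)
  fix \<delta> :: real assume "\<delta> \<in> {0<..}"
  then obtain I and C :: "'i \<Rightarrow> 'a set" where I: "finite I" "A \<subseteq> (\<Union>i\<in>I. C i)"
    "\<forall>i\<in>I. bounded (C i) \<and> diameter (C i) \<le> \<delta>"
    "(\<Sum>i\<in>I. unit_ball_vol (real s) * (diameter (C i) / 2) ^ s) \<le> B"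
    using cover by force
  obtain e where e: "bij_betw e {..<card I} I"
    using ex_bij_betw_nat_finite[OF I(1)] atLeast0LessThan by auto
  define C' where "C' n = (if n < card I then C (e n) else {})" for n
  have "A \<subseteq> (\<Union>n. C' n)"
  proof
    fix x assume "x \<in> A"
    then obtain i where "i \<in> I" "x \<in> C i" using I(2) by blast
    moreover obtain n where "n < card I" "e n = i"
      using e \<open>i \<in> I\<close> unfolding bij_betw_def by (metis imageE lessThan_iff)
    ultimately show "x \<in> (\<Union>n. C' n)" unfolding C'_def by auto
  qed
  moreover have "bounded (C' n) \<and> diameter (C' n) \<le> \<delta>" for n
    using I(3) e \<open>\<delta> \<in> {0<..}\<close> unfolding C'_def bij_betw_def by auto
  ultimately have C': "C' \<in> {C. A \<subseteq> (\<Union>i. C i) \<and> (\<forall>i. bounded (C i) \<and> diameter (C i) \<le> \<delta>)}" by blast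
  have "(\<Sum>n. if C' n = {} then 0 else ennreal (unit_ball_vol (real s) * (diameter (C' n) / 2) ^ s)) \<le>
      (\<Sum>n<card I. ennreal (unit_ball_vol (real s) * (diameter (C' n) / 2) ^ s))"
    by (subst suminf_finite[of "{..<card I}"]) (auto simp: C'_def intro: sum_mono)
  also have "\<dots> = (\<Sum>i\<in>I. ennreal (unit_ball_vol (real s) * (diameter (C i) / 2) ^ s))"
    unfolding C'_def
    using sum.reindex_bij_betw[OF e, of "\<lambda>i. ennreal (unit_ball_vol (real s) * (diameter (C i) / 2) ^ s)"]
    by simp
  also have "\<dots> = ennreal (\<Sum>i\<in>I. unit_ball_vol (real s) * (diameter (C i) / 2) ^ s)"
    using I(3) by (intro sum_ennreal) (auto intro!: mult_nonneg_nonneg zero_le_power diameter_ge_0)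
  also have "\<dots> \<le> ennreal B"
    using I(4) by (rule ennreal_leI)
  finally show "(INF C\<in>{C. A \<subseteq> (\<Union>i. C i) \<and> (\<forall>i. bounded (C i) \<and> diameter (C i) \<le> \<delta>)}.
      (\<Sum>i. if C i = {} then 0 else ennreal (unit_ball_vol (real s) * (diameter (C i) / 2) ^ s)))
        \<le> ennreal B"
    by (rule INF_lower2[OF C'])
qed

text \<open>The surface \<open>{z. infnorm z = R}\<close> of the cube \<open>[-R, R]^d\<close> is cut into \<open>2 d N^(d-1)\<close> cells of
  side \<open>2R/N\<close>: the cell \<open>(i, s, k)\<close> lies in the face \<open>z \<bullet> i = \<plusminus>R\<close> (sign \<open>s\<close>), and \<open>k j\<close>
  gives its position in the remaining coordinates \<open>j\<close>.\<close>
definition cube_cells :: "nat \<Rightarrow> ('a::euclidean_space \<times> bool \<times> ('a \<Rightarrow> nat)) set" where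
  "cube_cells N = (SIGMA i:Basis. UNIV \<times> PiE (Basis - {i}) (\<lambda>_. {..<N}))"

definition cube_cell :: "real \<Rightarrow> nat \<Rightarrow> 'a \<times> bool \<times> ('a \<Rightarrow> nat) \<Rightarrow> 'a::euclidean_space set" where
  "cube_cell R N = (\<lambda>(i, s, k). {z. z \<bullet> i = (if s then R else - R) \<and>
      (\<forall>j\<in>Basis - {i}. - R + 2 * R * real (k j) / N \<le> z \<bullet> j \<and>
        z \<bullet> j \<le> - R + 2 * R * (real (k j) + 1) / N)})"

lemma finite_cube_cells: "finite (cube_cells N)"
  unfolding cube_cells_def by (intro finite_SigmaI finite_cartesian_product finite_PiE) auto

lemma card_cube_cells:
  "card (cube_cells N :: ('a::euclidean_space \<times> _) set) = DIM('a) * (2 * N ^ (DIM('a) - 1))"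
proof -
  have "card ((UNIV :: bool set) \<times> PiE (Basis - {i}) (\<lambda>_. {..<N})) = 2 * N ^ (DIM('a) - 1)"
    if "i \<in> Basis" for i :: 'a
    using that by (simp add: card_cartesian_product card_PiE card_Diff_singleton)
  then show ?thesis unfolding cube_cells_def by (simp add: card_SigmaI finite_PiE)
qed

lemma interval_grid_index:
  fixes R a :: real and N :: nat
  assumes R: "R > 0" and N: "N \<ge> 1" and a: "\<bar>a\<bar> \<le> R"
  obtains k where "k < N" "- R + 2 * R * real k / N \<le> a" "a \<le> - R + 2 * R * (real k + 1) / N"
proof -
  define q where "q = (a + R) * N / (2 * R)"
  have "(a + R) * N \<le> (2 * R) * N" using a by (intro mult_right_mono) auto
  then have q: "0 \<le> q" "q \<le> N" using a R unfolding q_def by (auto simp: pos_divide_le_eq mult.commute)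
  have conv: "- R + 2 * R * y / N \<le> a \<longleftrightarrow> y \<le> q" "a \<le> - R + 2 * R * y / N \<longleftrightarrow> q \<le> y" for y :: real
    using R N unfolding q_def by (auto simp: field_simps)
  define k where "k = min (N - 1) (nat \<lfloor>q\<rfloor>)"
  have "real k \<le> q" "q \<le> real k + 1" using q N unfolding k_def by (auto simp: min_def) linarith+
  moreover have "k < N" using N unfolding k_def by simp
  ultimately show ?thesis using conv that by simp
qed

lemma cube_surface_subset_cells:
  fixes R :: real and N :: nat
  assumes R: "R > 0" and N: "N \<ge> 1"
  shows "{z::'a::euclidean_space. infnorm z = R} \<subseteq> (\<Union>c\<in>cube_cells N. cube_cell R N c)"
proof
  fix z :: 'a assume "z \<in> {z. infnorm z = R}"
  then have zR: "infnorm z = R" by simp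
  obtain i where i: "i \<in> Basis" "\<bar>z \<bullet> i\<bar> = R"
    using Max_in[of "(\<lambda>i. \<bar>z \<bullet> i\<bar>) ` Basis"] zR unfolding infnorm_Max by auto
  have "\<exists>k. k < N \<and> - R + 2 * R * real k / N \<le> z \<bullet> j \<and> z \<bullet> j \<le> - R + 2 * R * (real k + 1) / N"
    if "j \<in> Basis" for j
    using interval_grid_index[OF R N, of "z \<bullet> j"] Basis_le_infnorm[OF that, of z] zR by metis
  then obtain k where k: "\<And>j. j \<in> Basis \<Longrightarrow>
      k j < N \<and> - R + 2 * R * real (k j) / N \<le> z \<bullet> j \<and> z \<bullet> j \<le> - R + 2 * R * (real (k j) + 1) / N"
    by metis
  have "(i, z \<bullet> i \<ge> 0, restrict k (Basis - {i})) \<in> cube_cells N"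
    using i k unfolding cube_cells_def by (auto simp: restrict_PiE_iff)
  moreover have "z \<in> cube_cell R N (i, z \<bullet> i \<ge> 0, restrict k (Basis - {i}))"
    unfolding cube_cell_def prod.case mem_Collect_eq
  proof (intro conjI ballI)
    show "z \<bullet> i = (if 0 \<le> z \<bullet> i then R else - R)" using i(2) by auto
    fix j assume "j \<in> Basis - {i}"
    then show "- R + 2 * R * real (restrict k (Basis - {i}) j) / N \<le> z \<bullet> j"
      "z \<bullet> j \<le> - R + 2 * R * (real (restrict k (Basis - {i}) j) + 1) / N"
      using k[of j] by simp_all
  qed
  ultimately show "z \<in> (\<Union>c\<in>cube_cells N. cube_cell R N c)" by blast
qed

lemma cube_cell_dist:
  fixes z w :: "'a::euclidean_space"
  assumes R: "R > 0" and N: "N \<ge> 1" and z: "z \<in> cube_cell R N c" and w: "w \<in> cube_cell R N c"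
  shows "norm (z - w) \<le> DIM('a) * (2 * R / N)"
proof -
  obtain i s k where c: "c = (i, s, k)" by (cases c) auto
  have "\<bar>(z - w) \<bullet> j\<bar> \<le> 2 * R / N" if "j \<in> Basis" for j
  proof (cases "j = i")
    case True then show ?thesis using z w R unfolding c cube_cell_def by (auto simp: inner_diff_left)
  next
    case False
    define lo where "lo = - R + 2 * R * real (k j) / N"
    have "- R + 2 * R * (real (k j) + 1) / N = lo + 2 * R / N"
      unfolding lo_def by (simp add: distrib_left add_divide_distrib)
    moreover have "lo \<le> z \<bullet> j" "z \<bullet> j \<le> - R + 2 * R * (real (k j) + 1) / N"
      "lo \<le> w \<bullet> j" "w \<bullet> j \<le> - R + 2 * R * (real (k j) + 1) / N"
      using z w that False unfolding c cube_cell_def lo_def by auto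
    ultimately show ?thesis by (simp add: inner_diff_left)
  qed
  then have "(\<Sum>j\<in>Basis. \<bar>(z - w) \<bullet> j\<bar>) \<le> (\<Sum>j\<in>(Basis :: 'a set). 2 * R / N)"
    by (rule sum_mono)
  then show ?thesis using norm_le_l1[of "z - w"] by simp
qed

lemma closest_point_along_normal:
  fixes K :: "'a::euclidean_space set"
  assumes K: "convex K" "closed K" and x: "x \<in> K" and normal: "\<forall>y\<in>K. inner v (y - x) \<le> 0"
    and t: "t \<ge> 0"
  shows "closest_point K (x + t *\<^sub>R v) = x"
proof -
  have "dist (x + t *\<^sub>R v) x \<le> dist (x + t *\<^sub>R v) y" if y: "y \<in> K" for y
  proof -
    have "inner (x - y) v = - inner v (y - x)"
      by (simp add: inner_diff_left inner_diff_right inner_commute)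
    then have "inner (x - y) v \<ge> 0" using normal y by simp
    then have "norm (t *\<^sub>R v) \<le> norm ((x - y) + t *\<^sub>R v)"
      unfolding norm_le using t by (simp add: inner_add_left inner_add_right inner_commute)
    then show ?thesis by (simp add: dist_norm algebra_simps)
  qed
  then show ?thesis by (intro closest_point_unique[symmetric] K x) auto
qed

text \<open>Moving from a boundary point along an outer normal until the cube surface is reached shows
  that the point is the nearest point of \<open>K\<close> to some point of the cube surface.\<close>
lemma rev_spherical_image_subset_closest_point_cube:
  fixes K :: "'a::euclidean_space set"
  assumes K: "convex K" "closed K" "K \<subseteq> ball 0 R"
  shows "rev_spherical_image K UNIV \<subseteq> closest_point K ` {z. infnorm z = R}"
proof
  fix x assume "x \<in> rev_spherical_image K UNIV"
  then obtain v where x: "x \<in> K" and v: "norm v = 1" and normal: "\<forall>y\<in>K. inner v (y - x) \<le> 0"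
    unfolding rev_spherical_image_def using frontier_subset_closed[OF K(2)] by blast
  let ?\<phi> = "\<lambda>t. infnorm (x + t *\<^sub>R v)" and ?T = "R + sqrt DIM('a) * R"
  have "norm x < R" using K x by auto
  then have "R > 0" using norm_ge_zero le_less_trans by blast
  have "?\<phi> 0 \<le> R" using infnorm_le_norm[of x] \<open>norm x < R\<close> by simp
  moreover have "R \<le> ?\<phi> ?T"
  proof -
    have "norm (?T *\<^sub>R v) \<le> norm (x + ?T *\<^sub>R v) + norm x"
      using norm_triangle_ineq4[of "x + ?T *\<^sub>R v" x] by simp
    moreover have "norm (?T *\<^sub>R v) = ?T" using v \<open>R > 0\<close> by (simp add: abs_of_nonneg)
    ultimately have "sqrt DIM('a) * R \<le> norm (x + ?T *\<^sub>R v)" using \<open>norm x < R\<close> by linarith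
    also have "\<dots> \<le> sqrt DIM('a) * ?\<phi> ?T" by (rule norm_le_infnorm)
    finally show ?thesis by simp
  qed
  moreover have "continuous_on {0..?T} ?\<phi>" by (intro continuous_intros)
  ultimately obtain t where "0 \<le> t" "?\<phi> t = R"
    using IVT'[of ?\<phi> 0 R ?T] \<open>R > 0\<close> by (auto simp: add_nonneg_nonneg)
  then show "x \<in> closest_point K ` {z. infnorm z = R}"
    using closest_point_along_normal[OF K(1,2) x normal \<open>0 \<le> t\<close>] by force
qed

lemma diameter_closest_point_cube_cell:
  fixes K :: "'a::euclidean_space set"
  assumes K: "convex K" "closed K" "K \<noteq> {}" and "R > 0" "N \<ge> 1"
  shows "diameter (closest_point K ` cube_cell R N c) \<le> DIM('a) * (2 * R / N)"
proof (rule diameter_le)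
  fix a b assume "a \<in> closest_point K ` cube_cell R N c" "b \<in> closest_point K ` cube_cell R N c"
  then obtain a' b' where "a' \<in> cube_cell R N c" "b' \<in> cube_cell R N c"
    "a = closest_point K a'" "b = closest_point K b'"
    by blast
  then show "norm (a - b) \<le> DIM('a) * (2 * R / N)"
    using closest_point_lipschitz[OF K, of a' b'] cube_cell_dist[OF \<open>R > 0\<close> \<open>N \<ge> 1\<close>, of a' c b']
    by (simp add: dist_norm)
qed (use \<open>R > 0\<close> \<open>N \<ge> 1\<close> in simp)

lemma hausdorff_outer_rev_spherical_image_bounded:
  fixes K :: "'a::euclidean_space set"
  assumes K: "convex K" "compact K" "K \<noteq> {}"
  obtains B where "hausdorff_outer (DIM('a) - 1) (rev_spherical_image K UNIV) \<le> ennreal B"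
proof -
  obtain R where R: "R > 0" "K \<subseteq> ball 0 R"
    using compact_imp_bounded[OF K(2)] bounded_subset_ballD by blast
  have "closed K" using K(2) compact_imp_closed by blast
  let ?s = "DIM('a) - 1" and ?D = "real DIM('a)"
  define B where "B = real (DIM('a) * 2) * (unit_ball_vol ?s * (?D * R) ^ ?s)"
  have "hausdorff_outer ?s (rev_spherical_image K UNIV) \<le> ennreal B"
  proof (rule hausdorff_outer_le_finite_cover)
    fix \<delta> :: real assume "\<delta> > 0"
    define N where "N = nat \<lceil>?D * (2 * R) / \<delta>\<rceil> + 1"
    have "N \<ge> 1" and "real N > 0" unfolding N_def by simp_all
    have "?D * (2 * R) / \<delta> \<le> real N" unfolding N_def by linarith
    then have Nd: "?D * (2 * R / N) \<le> \<delta>"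
      using \<open>\<delta> > 0\<close> \<open>real N > 0\<close> by (simp add: field_simps)
    define C where "C c = closest_point K ` cube_cell R N c" for c :: "'a \<times> bool \<times> ('a \<Rightarrow> nat)"
    have bounded: "bounded (C c)" for c
      unfolding C_def using compact_imp_bounded[OF K(2)] closest_point_in_set[OF \<open>closed K\<close> K(3)]
      by (auto intro: bounded_subset)
    have diam: "diameter (C c) \<le> ?D * (2 * R / N)" for c
      unfolding C_def by (rule diameter_closest_point_cube_cell[OF K(1) \<open>closed K\<close> K(3) R(1) \<open>N \<ge> 1\<close>])
    have "rev_spherical_image K UNIV \<subseteq> closest_point K ` {z. infnorm z = R}"
      by (rule rev_spherical_image_subset_closest_point_cube[OF K(1) \<open>closed K\<close> R(2)])
    also have "\<dots> \<subseteq> (\<Union>c\<in>cube_cells N. C c)"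
      using cube_surface_subset_cells[OF R(1) \<open>N \<ge> 1\<close>] unfolding C_def by blast
    finally have cover: "rev_spherical_image K UNIV \<subseteq> (\<Union>c\<in>cube_cells N. C c)" .
    have "(\<Sum>c\<in>cube_cells N. unit_ball_vol ?s * (diameter (C c) / 2) ^ ?s) \<le>
        (\<Sum>c\<in>(cube_cells N :: ('a \<times> _) set). unit_ball_vol ?s * (?D * R / N) ^ ?s)"
      using diam diameter_ge_0[OF bounded]
      by (intro sum_mono mult_left_mono power_mono) (auto simp: field_simps)
    also have "\<dots> = B"
      using \<open>real N > 0\<close> unfolding B_def by (simp add: card_cube_cells power_divide field_simps)
    finally show "\<exists>I (C :: 'a \<times> bool \<times> ('a \<Rightarrow> nat) \<Rightarrow> 'a set). finite I \<and>
        rev_spherical_image K UNIV \<subseteq> (\<Union>i\<in>I. C i) \<and> (\<forall>i\<in>I. bounded (C i) \<and> diameter (C i) \<le> \<delta>) \<and>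
        (\<Sum>i\<in>I. unit_ball_vol ?s * (diameter (C i) / 2) ^ ?s) \<le> B"
      using finite_cube_cells cover bounded order_trans[OF diam Nd]
      by (intro exI[of _ "cube_cells N"] exI[of _ C]) auto
  qed
  then show ?thesis by (rule that)
qed

lemma sets_surface_area_measure[simp, measurable_cong]:
  "sets (surface_area_measure (K :: 'a::euclidean_space set)) = sets borel"
  unfolding surface_area_measure_def by (simp add: sets.sigma_sets_eq[of borel, simplified])

lemma space_surface_area_measure[simp]:
  "space (surface_area_measure (K :: 'a::euclidean_space set)) = UNIV"
  unfolding surface_area_measure_def by simp

lemma emeasure_surface_area_measure_le:
  fixes K :: "'a::euclidean_space set"
  shows "emeasure (surface_area_measure K) B \<le>
    hausdorff_outer (DIM('a) - 1) (rev_spherical_image K (B \<inter> sphere 0 1))"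
  unfolding surface_area_measure_def emeasure_measure_of_conv by auto

lemma AE_surface_area_measure: "AE v in surface_area_measure K. v \<in> sphere 0 1"
proof (rule AE_I')
  have "rev_spherical_image K (- sphere 0 1 \<inter> sphere 0 1) = {}"
    unfolding rev_spherical_image_def by auto
  then show "- sphere 0 1 \<in> null_sets (surface_area_measure K)"
    using emeasure_surface_area_measure_le[of K "- sphere 0 1"]
    by (auto simp: null_sets_def hausdorff_outer_empty)
qed auto

lemma finite_measure_surface_area_measure:
  fixes K :: "'a::euclidean_space set"
  assumes "convex K" "compact K" "K \<noteq> {}"
  shows "finite_measure (surface_area_measure K)"
proof (rule finite_measureI)
  obtain B where B: "hausdorff_outer (DIM('a) - 1) (rev_spherical_image K UNIV) \<le> ennreal B"
    using hausdorff_outer_rev_spherical_image_bounded[OF assms] .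
  have "rev_spherical_image K (UNIV \<inter> sphere 0 1) \<subseteq> rev_spherical_image K UNIV"
    unfolding rev_spherical_image_def by blast
  then have "emeasure (surface_area_measure K) UNIV \<le> ennreal B"
    using emeasure_surface_area_measure_le[of K UNIV] hausdorff_outer_mono B by (metis order_trans)
  then show "emeasure (surface_area_measure K) (space (surface_area_measure K)) \<noteq> \<infinity>"
    by (auto simp: top_unique)
qed

lemma integrable_continuous_AE_compact:
  fixes f :: "'a::euclidean_space \<Rightarrow> real"
  assumes "finite_measure M" "sets M = sets borel" "compact S" "AE x in M. x \<in> S"
    and f: "continuous_on UNIV f"
  shows "integrable M f"
proof -
  obtain B where B: "\<forall>y\<in>f ` S. norm y \<le> B"
    using compact_imp_bounded[OF compact_continuous_image[OF continuous_on_subset[OF f] \<open>compact S\<close>]]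
    unfolding bounded_iff by auto
  have "AE x in M. norm (f x) \<le> B"
    by (rule AE_mp[OF \<open>AE x in M. x \<in> S\<close>], rule AE_I2) (use B in auto)
  moreover have "f \<in> borel_measurable M"
    using borel_measurable_continuous_onI[OF f]
    by (simp add: measurable_cong_sets[OF \<open>sets M = sets borel\<close>])
  ultimately show ?thesis by (rule finite_measure.integrable_const_bound[OF \<open>finite_measure M\<close>])
qed

lemma sets_lp_surface_area_measure[simp, measurable_cong]:
  "sets (lp_surface_area_measure p (K :: 'a::euclidean_space set)) = sets borel"
  by (simp add: lp_surface_area_measure_def)

text \<open>\<open>h_K^(1-p)\<close> is continuous on the sphere, where \<open>h_K\<close> is positive, hence bounded there.\<close>
lemma finite_measure_lp_surface_area_measure:
  fixes K :: "'a::euclidean_space set"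
  assumes K: "convex_body_io K"
  shows "finite_measure (lp_surface_area_measure p K)"
proof (rule finite_measureI)
  have "convex K" "compact K" "K \<noteq> {}"
    using K unfolding convex_body_io_def convex_body_def by auto
  have [measurable]: "supp_fun K \<in> borel_measurable borel"
    by (rule borel_measurable_continuous_onI[OF supp_fun_convex_body_io(1)[OF K]])
  have "\<forall>v\<in>sphere 0 1. 0 \<le> supp_fun K v \<and> (supp_fun K v = 0 \<longrightarrow> 0 < 1 - p)"
    using supp_fun_convex_body_io(2)[OF K] by (metis less_eq_real_def less_irrefl)
  then have "continuous_on (sphere 0 1) (\<lambda>v. supp_fun K v powr (1 - p))"
    by (intro continuous_on_powr' continuous_on_subset[OF supp_fun_convex_body_io(1)[OF K]]) auto
  then have "bounded ((\<lambda>v. supp_fun K v powr (1 - p)) ` sphere 0 1)"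
    by (intro compact_imp_bounded compact_continuous_image compact_sphere)
  then obtain C where "\<forall>v\<in>sphere 0 1. \<bar>supp_fun K v powr (1 - p)\<bar> \<le> C"
    unfolding bounded_iff by auto
  then have C: "supp_fun K v powr (1 - p) \<le> C" if "v \<in> sphere 0 1" for v
    using that by (auto simp: abs_le_iff)
  have "emeasure (lp_surface_area_measure p K) UNIV =
      (\<integral>\<^sup>+v. ennreal (supp_fun K v powr (1 - p)) \<partial>surface_area_measure K)"
    unfolding lp_surface_area_measure_def by (subst emeasure_density) auto
  also have "\<dots> \<le> (\<integral>\<^sup>+v. ennreal C \<partial>surface_area_measure K)"
    by (intro nn_integral_mono_AE AE_mp[OF AE_surface_area_measure AE_I2] impI ennreal_leI C)
  also have "\<dots> < \<infinity>"
    using finite_measure.emeasure_finite[OF finite_measure_surface_area_measure[OF \<open>convex K\<close>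
          \<open>compact K\<close> \<open>K \<noteq> {}\<close>], of UNIV]
    by (simp add: ennreal_mult_less_top less_top)
  finally show "emeasure (lp_surface_area_measure p K) (space (lp_surface_area_measure p K)) \<noteq> \<infinity>"
    by (simp add: lp_surface_area_measure_def)
qed

lemma integrable_lp_surface_area_measure:
  fixes f :: "'a::euclidean_space \<Rightarrow> real"
  assumes "convex_body_io K" and "continuous_on UNIV f"
  shows "integrable (lp_surface_area_measure p K) f"
proof (rule integrable_continuous_AE_compact[OF finite_measure_lp_surface_area_measure[OF assms(1)]])
  have [measurable]: "supp_fun K \<in> borel_measurable borel"
    by (rule borel_measurable_continuous_onI[OF supp_fun_convex_body_io(1)[OF assms(1)]])
  show "AE v in lp_surface_area_measure p K. v \<in> sphere 0 1"
    unfolding lp_surface_area_measure_def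
    by (subst AE_density) (auto intro: AE_mp[OF AE_surface_area_measure])
qed (simp_all add: assms(2))

section \<open>The operators \<open>\<Pi>_{Q,p}\<close> and \<open>\<Gamma>_{Q,p}\<close>\<close>

lemma linear_vector_matrix_mult_right: "linear (\<lambda>A :: real^'m^'n. v v* A)"
  by (intro linearI) (simp_all add: vector_matrix_mult_add_rdistrib vector_scaleR_matrix_ac)

lemma linear_vector_matrix_mult_left: "linear (\<lambda>v :: real^'n. v v* (A :: real^'m^'n))"
  by (intro linearI) (simp_all add: vector_matrix_left_distrib scaleR_vector_matrix_assoc)

lemma continuous_on_vector_matrix_mult[continuous_intros]:
  fixes f :: "'a::topological_space \<Rightarrow> real^'n" and g :: "'a \<Rightarrow> real^'m^'n"
  assumes "continuous_on S f" "continuous_on S g"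
  shows "continuous_on S (\<lambda>z. f z v* g z)"
  unfolding vector_matrix_mult_def by (intro continuous_intros assms)

lemma inverse_radial_fun_polar_Pi_body:
  fixes K :: "(real^'n) set" and Q :: "(real^'m) set" and \<theta> :: "real^'m^'n"
  assumes p: "p \<ge> 1" and K: "convex_body_io K" and Q: "convex_body_o Q"
  shows "real_of_ereal (inverse (radial_fun (polar (Pi_body Q p K)) \<theta>)) powr p =
    (\<integral>v. supp_fun Q (v v* \<theta>) powr p \<partial>lp_surface_area_measure p K)"
proof -
  let ?\<nu> = "lp_surface_area_measure p K"
  define H where "H \<theta> = (\<integral>v. supp_fun Q (v v* \<theta>) powr p \<partial>?\<nu>) powr (1 / p)" for \<theta> :: "real^'m^'n"
  have int: "integrable ?\<nu> (\<lambda>v. supp_fun Q (v v* \<theta>) powr p)" for \<theta>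
    using p by (intro integrable_lp_surface_area_measure[OF K] continuous_on_supp_fun_powr[OF Q])
      (auto intro: continuous_intros)
  have "sublinear (\<lambda>\<theta>. supp_fun Q (v v* \<theta>))" for v :: "real^'n"
    by (rule sublinear_compose_linear[OF supp_fun_convex_body_o(1)[OF Q] linear_vector_matrix_mult_right])
  then have "sublinear H"
    unfolding H_def by (rule sublinear_Lp_norm[OF p _ supp_fun_convex_body_o(2)[OF Q] int])
  moreover have "Pi_body Q p K = wulff_shape H"
    unfolding Pi_body_def wulff_shape_def H_def ..
  ultimately have "polar (Pi_body Q p K) = {x. H x \<le> 1}" by (simp add: polar_wulff_shape)
  moreover have "0 \<le> H \<theta>" unfolding H_def by simp
  then have "real_of_ereal (inverse (radial_fun {x. H x \<le> 1} \<theta>)) = H \<theta>"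
    using sublinear_scaleR[OF \<open>sublinear H\<close>, of _ \<theta>] by (intro inverse_radial_fun_sublevel) auto
  ultimately have "real_of_ereal (inverse (radial_fun (polar (Pi_body Q p K)) \<theta>)) = H \<theta>" by simp
  then show ?thesis
    using p supp_fun_convex_body_o(2)[OF Q] by (simp add: H_def powr_inverse_powr)
qed

lemma measure_star_body_pos:
  fixes L :: "'a::euclidean_space set"
  assumes "star_body L"
  shows "0 < measure lborel L"
proof -
  obtain e where "e > 0" "ball 0 e \<subseteq> L"
    using assms unfolding star_body_def by (meson mem_interior)
  moreover have "compact L" using assms unfolding star_body_def by simp
  ultimately have "measure lborel (ball (0::'a) e) \<le> measure lborel L"
    by (intro measure_mono_fmeasurable) (auto intro: fmeasurable_compact)
  then show ?thesis using content_ball_pos[OF \<open>e > 0\<close>, of "0::'a"] by linarith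
qed

lemma supp_fun_Gamma_body_powr:
  fixes L :: "(real^'m^'n) set" and Q :: "(real^'m) set" and v :: "real^'n"
  assumes p: "p \<ge> 1" and Q: "convex_body_o Q" and L: "star_body L"
  shows "supp_fun (Gamma_body Q p L) v powr p =
    (1 / measure lborel L) * (LINT x:L|lborel. supp_fun Q (v v* x) powr p)"
proof -
  let ?V = "measure lborel L"
  have "?V > 0" by (rule measure_star_body_pos[OF L])
  define I where "I v = (LINT x:L|lborel. supp_fun Q (v v* x) powr p)" for v :: "real^'n"
  define H where "H v = ((1 / ?V) * I v) powr (1 / p)" for v
  have ind_powr: "(indicator L x * a) powr p = indicator L x * a powr p" for x and a :: real
    using p by (simp add: indicator_def)
  have "integrable lborel (\<lambda>x. indicator L x *\<^sub>R supp_fun Q (v v* x) powr p)" for v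
    using L p unfolding star_body_def
    by (intro borel_integrable_compact continuous_on_subset[OF continuous_on_supp_fun_powr[OF Q]])
      (auto intro: continuous_intros)
  then have int: "integrable lborel (\<lambda>x. (indicator L x * supp_fun Q (v v* x)) powr p)" for v
    by (simp add: ind_powr)
  have I_eq: "I v = (\<integral>x. (indicator L x * supp_fun Q (v v* x)) powr p \<partial>lborel)" for v
    unfolding I_def set_lebesgue_integral_def ind_powr by simp
  have I_nonneg: "I v \<ge> 0" for v
    unfolding I_eq by (simp add: ind_powr)
  have H_eq: "H v = (1 / ?V) powr (1 / p) *
      (\<integral>x. (indicator L x * supp_fun Q (v v* x)) powr p \<partial>lborel) powr (1 / p)" for v
    unfolding H_def I_eq[symmetric] using \<open>?V > 0\<close> I_nonneg by (subst powr_mult) auto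
  have "sublinear (\<lambda>v. indicator L x * supp_fun Q (v v* x))" for x :: "real^'m^'n"
    by (intro sublinear_cmult sublinear_compose_linear[OF supp_fun_convex_body_o(1)[OF Q]]
        linear_vector_matrix_mult_left) simp
  then have "sublinear (\<lambda>v. (\<integral>x. (indicator L x * supp_fun Q (v v* x)) powr p \<partial>lborel) powr (1 / p))"
    by (rule sublinear_Lp_norm[OF p _ _ int]) (simp add: supp_fun_convex_body_o(2)[OF Q])
  then have "sublinear H"
    unfolding H_eq by (rule sublinear_cmult) simp
  moreover have "Gamma_body Q p L = wulff_shape H"
    unfolding Gamma_body_def wulff_shape_def H_def I_def ..
  ultimately show ?thesis
    using p \<open>?V > 0\<close> I_nonneg[of v] by (simp add: supp_fun_wulff_shape H_def I_def powr_inverse_powr)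
qed

lemma borel_measurable_supp_fun_vector_matrix_mult:
  fixes M :: "(real^'n) measure" and Q :: "(real^'m) set"
  assumes "convex_body_o Q" "0 < p" "sets M = sets borel"
  shows "(\<lambda>(x :: real^'m^'n, v). supp_fun Q (v v* x) powr p) \<in> borel_measurable (borel \<Otimes>\<^sub>M M)"
proof -
  have "(\<lambda>z::(real^'m^'n) \<times> (real^'n). supp_fun Q (snd z v* fst z) powr p) \<in> borel_measurable borel"
    using assms(1,2)
    by (intro borel_measurable_continuous_onI continuous_on_supp_fun_powr
        continuous_on_vector_matrix_mult continuous_on_fst continuous_on_snd continuous_on_id)
  then show ?thesis
    by (simp add: borel_prod[symmetric] case_prod_beta'
        measurable_cong_sets[OF sets_pair_measure_cong[OF refl assms(3)] refl])
qed

lemma dual_mixed_volume_polar_Pi_body: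
  fixes K :: "(real^'n) set" and Q :: "(real^'m) set" and L :: "(real^'m^'n) set"
  assumes p: "p \<ge> 1" and K: "convex_body_io K" and Q: "convex_body_o Q" and L: "star_body L"
  shows "dual_mixed_volume p L (polar (Pi_body Q p K)) =
    (real (CARD('n) * CARD('m)) + p) / real (CARD('n) * CARD('m)) *
      (\<integral>v. (LINT x:L|lborel. supp_fun Q (v v* x) powr p) \<partial>lp_surface_area_measure p K)"
proof -
  let ?\<nu> = "lp_surface_area_measure p K" and ?h = "supp_fun Q"
  have "p > 0" using p by simp
  have hom: "?h (v v* (r *\<^sub>R x)) powr p = r powr p * ?h (v v* x) powr p" if "0 < r" for r v x
    using that supp_fun_convex_body_o[OF Q]
    by (simp add: vector_scaleR_matrix_ac sublinear_scaleR powr_mult)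
  have int_L: "set_integrable lborel L (\<lambda>x. ?h (v v* x) powr p)" for v
    using L \<open>p > 0\<close> unfolding set_integrable_def star_body_def
    by (intro borel_integrable_compact continuous_on_subset[OF continuous_on_supp_fun_powr[OF Q]])
      (auto intro: continuous_intros)
  have int_\<nu>: "integrable ?\<nu> (\<lambda>v. ?h (v v* x) powr p)" for x
    using \<open>p > 0\<close> by (intro integrable_lp_surface_area_measure[OF K] continuous_on_supp_fun_powr[OF Q])
      (auto intro: continuous_intros)
  have "dual_mixed_volume p L (polar (Pi_body Q p K)) = (1 / real DIM(real^'m^'n)) *
      (\<integral>\<theta>. real_of_ereal (radial_fun L \<theta>) powr (DIM(real^'m^'n) + p) * (\<integral>v. ?h (v v* \<theta>) powr p \<partial>?\<nu>)
        \<partial>sphere_measure)"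
    unfolding dual_mixed_volume_def inverse_radial_fun_polar_Pi_body[OF p K Q] ..
  also have "\<dots> = (1 / real DIM(real^'m^'n)) *
      ((DIM(real^'m^'n) + p) * (\<integral>v. (LINT x:L|lborel. ?h (v v* x) powr p) \<partial>?\<nu>))"
    using \<open>p > 0\<close> hom int_L int_\<nu> finite_measure_lp_surface_area_measure[OF K]
      borel_measurable_supp_fun_vector_matrix_mult[OF Q \<open>p > 0\<close> sets_lp_surface_area_measure]
    by (subst integral_sphere_radial_Fubini[OF L]) (auto intro: finite_measure.axioms(1))
  finally show ?thesis by simp
qed

lemma lp_mixed_volume_Gamma_body:
  fixes K :: "(real^'n) set" and Q :: "(real^'m) set" and L :: "(real^'m^'n) set"
  assumes "p \<ge> 1" and "convex_body_o Q" and "star_body L"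
  shows "lp_mixed_volume p K (Gamma_body Q p L) =
    (\<integral>v. (LINT x:L|lborel. supp_fun Q (v v* x) powr p) \<partial>lp_surface_area_measure p K) /
      (CARD('n) * measure lborel L)"
  unfolding lp_mixed_volume_def supp_fun_Gamma_body_powr[OF assms] by simp

theorem lemma3p4:
  fixes p :: real
    and K :: "(real^'n) set"
    and Q :: "(real^'m) set"
    and L :: "(real^'m^'n) set"
  assumes "p \<ge> 1"
    and "convex_body_io K"
    and "convex_body_o Q"
    and "star_body L"
  shows "dual_mixed_volume p L (polar (Pi_body Q p K)) =
         ((real (CARD('n) * CARD('m)) + p) * measure lborel L / real CARD('m)) *
           lp_mixed_volume p K (Gamma_body Q p L)"
  using measure_star_body_pos[OF assms(4)]
  unfolding dual_mixed_volume_polar_Pi_body[OF assms] lp_mixed_volume_Gamma_body[OF assms(1,3,4)]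
  by (simp add: field_simps)

end
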